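(* Let $u=u_1\cdots u_r$ be an allowed word of $\Sigma_A$ of length $r\ge2$, and let $$f_u(z)=\tilde\tau_u(z)\det(\mathbf I-zP)+z^{r-1}\delta_u\big(\operatorname{adj}(\mathbf I-zP)\big)_{u_ru_1}.$$ Let $z_0$ be the smallest positive real root of $f_u$. Then $\rho(C_u)=\ln z_0$.
   Context: Let $\Sigma=\{1,\dots,N\}$, $A$ an irreducible $N\times N$ $0$–$1$ matrix, $\Sigma_A=\{x\in\Sigma^{\mathbb N}:A_{x_nx_{n+1}}=1\ \forall n\}$ with left shift $\sigma$. A word is allowed if it occurs in some element of $\Sigma_A$; $C_u$ is the set of $x\in\Sigma_A$ beginning with $u$. $P$ is a row-stochastic matrix with $P_{ij}>0$ iff $A_{ij}=1$, $\mathbf p$ its stationary vector, $\mu=\mu_P$ the Markov measure $\mu(C_w)=p_{w_1}P_{w_1w_2}\cdots P_{w_{n-1}w_n}$. For a hole $H$, $\mathcal W_m=\{x:\sigma^ix\notin H,0\le i\le m\}$, $\rho(H)=-\lim_m\frac1m\ln\mu(\mathcal W_m)$. $\operatorname{adj}$ is the adjugate matrix. $\delta_u=P_{u_1u_2}\cdots P_{u_{r-1}u_r}$. Weighted autocorrelation: for $0\le s\le r-1$, $c_{s,u,u}=1$ if $u_{s+1}\cdots u_r=u_1\cdots u_{r-s}$ and $0$ otherwise; $\delta_{s,u,u}=\prod_{j=r-s}^{r-1}P_{u_ju_{j+1}}$ (empty product $=1$); $\tau_u(z)=\sum_{s=0}^{r-1}c_{s,u,u}\delta_{s,u,u}z^{s}$;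 and $\tilde\tau_u(z)=\tau_u(z)-z^{r-1}c_{r-1,u,u}\delta_u$. *)

theory Defs
  imports "Jordan_Normal_Form.Determinant"
begin

(* States are 0..N-1 (the paper's 1..N shifted); words are lists, 0-indexed. *)

definition zero_one_mat :: "nat \<Rightarrow> real mat \<Rightarrow> bool" where
  "zero_one_mat N A \<longleftrightarrow> A \<in> carrier_mat N N \<and> (\<forall>i<N. \<forall>j<N. A $$ (i,j) = 0 \<or> A $$ (i,j) = 1)"

definition irreducible_mat :: "nat \<Rightarrow> real mat \<Rightarrow> bool" where
  "irreducible_mat N A \<longleftrightarrow> (\<forall>i<N. \<forall>j<N. \<exists>n>0. (A ^\<^sub>m n) $$ (i,j) > 0)"

definition SigmaA :: "nat \<Rightarrow> real mat \<Rightarrow> (nat \<Rightarrow> nat) set" where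
  "SigmaA N A = {x. (\<forall>n. x n < N) \<and> (\<forall>n. A $$ (x n, x (Suc n)) = 1)}"

definition shift :: "(nat \<Rightarrow> nat) \<Rightarrow> (nat \<Rightarrow> nat)" where
  "shift x = (\<lambda>n. x (Suc n))"

definition allowed :: "nat \<Rightarrow> real mat \<Rightarrow> nat list \<Rightarrow> bool" where
  "allowed N A w \<longleftrightarrow> (\<exists>x\<in>SigmaA N A. \<exists>k. \<forall>i<length w. x (k + i) = w ! i)"

definition cyl :: "nat \<Rightarrow> real mat \<Rightarrow> nat list \<Rightarrow> (nat \<Rightarrow> nat) set" where
  "cyl N A w = {x \<in> SigmaA N A. \<forall>k<length w. x k = w ! k}"

definition row_stochastic_compatible :: "nat \<Rightarrow> real mat \<Rightarrow> real mat \<Rightarrow> bool" where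
  "row_stochastic_compatible N A P \<longleftrightarrow> P \<in> carrier_mat N N \<and>
     (\<forall>i<N. \<forall>j<N. P $$ (i,j) \<ge> 0) \<and>
     (\<forall>i<N. (\<Sum>j<N. P $$ (i,j)) = 1) \<and>
     (\<forall>i<N. \<forall>j<N. P $$ (i,j) > 0 \<longleftrightarrow> A $$ (i,j) = 1)"

definition stationary_vector :: "nat \<Rightarrow> real mat \<Rightarrow> (nat \<Rightarrow> real) \<Rightarrow> bool" where
  "stationary_vector N P p \<longleftrightarrow> (\<forall>i<N. p i \<ge> 0) \<and> (\<Sum>i<N. p i) = 1 \<and>
     (\<forall>j<N. (\<Sum>i<N. p i * P $$ (i,j)) = p j)"

definition markov_cyl :: "(nat \<Rightarrow> real) \<Rightarrow> real mat \<Rightarrow> nat list \<Rightarrow> real" where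
  "markov_cyl p P w = (if w = [] then 1 else
      p (hd w) * (\<Prod>j<length w - 1. P $$ (w ! j, w ! (j+1))))"

(* Markov measure of a set S that is a union of cylinders of length n:
   sum of mu(C_w) over the allowed words w of length n with C_w \<subseteq> S *)
definition markov_measure_lvl ::
  "nat \<Rightarrow> real mat \<Rightarrow> (nat \<Rightarrow> real) \<Rightarrow> real mat \<Rightarrow> nat \<Rightarrow> (nat \<Rightarrow> nat) set \<Rightarrow> real" where
  "markov_measure_lvl N A p P n S =
     (\<Sum>w\<in>{w. set w \<subseteq> {..<N} \<and> length w = n \<and> allowed N A w \<and> cyl N A w \<subseteq> S}. markov_cyl p P w)"

definition survivors :: "nat \<Rightarrow> real mat \<Rightarrow> (nat \<Rightarrow> nat) set \<Rightarrow> nat \<Rightarrow> (nat \<Rightarrow> nat) set" where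
  "survivors N A H m = {x \<in> SigmaA N A. \<forall>i\<le>m. (shift ^^ i) x \<notin> H}"

definition autocorr_c :: "nat list \<Rightarrow> nat \<Rightarrow> bool" where
  "autocorr_c u s \<longleftrightarrow> drop s u = take (length u - s) u"

(* delta_{s,u,u} = prod_{j=r-s}^{r-1} P_{u_j u_{j+1}} (1-based) *)
definition autocorr_delta :: "real mat \<Rightarrow> nat list \<Rightarrow> nat \<Rightarrow> real" where
  "autocorr_delta P u s = (\<Prod>j\<in>{length u - s..<length u}. P $$ (u ! (j-1), u ! j))"

definition word_delta :: "real mat \<Rightarrow> nat list \<Rightarrow> real" where
  "word_delta P u = (\<Prod>j\<in>{1..<length u}. P $$ (u ! (j-1), u ! j))"

definition tau :: "real mat \<Rightarrow> nat list \<Rightarrow> real \<Rightarrow> real" where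
  "tau P u z = (\<Sum>s<length u. (if autocorr_c u s then 1 else 0) * autocorr_delta P u s * z ^ s)"

definition tau_tilde :: "real mat \<Rightarrow> nat list \<Rightarrow> real \<Rightarrow> real" where
  "tau_tilde P u z = tau P u z
     - z ^ (length u - 1) * (if autocorr_c u (length u - 1) then 1 else 0) * word_delta P u"

definition f_u :: "nat \<Rightarrow> real mat \<Rightarrow> nat list \<Rightarrow> real \<Rightarrow> real" where
  "f_u N P u z = tau_tilde P u z * det (1\<^sub>m N - z \<cdot>\<^sub>m P)
     + z ^ (length u - 1) * word_delta P u * (adj_mat (1\<^sub>m N - z \<cdot>\<^sub>m P)) $$ (last u, hd u)"

end

theory Submission
  imports Defs
begin

text \<open>Let \<open>surv n\<close> be the Markov mass of the words of length \<open>n\<close> avoiding \<open>u\<close>, so that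
  \<open>\<mu>(W\<^sub>m) = surv (m + r)\<close>. Appending one letter to an avoiding word, and appending a
  whole copy of \<open>u\<close> to it (which creates a first occurrence \<open>k\<close> letters in exactly when
  \<open>r - k\<close> is a period of \<open>u\<close>), gives two renewal equations. In generating functions
  they become linear relations involving \<open>I - zP\<close>; multiplying by its adjugate yields
  \<open>(1 - z) gf_hit(z) f_u(z) = \<delta>\<^sub>u z\<^sup>r det(I - zP) p\<^sub>u\<^sub>1\<close> wherever
  \<open>\<Sum> surv(n) z\<^sup>n\<close> converges.

  At a positive root \<open>z0\<close> of \<open>f_u\<close> inside the disc of convergence, \<open>det(I - z0 P) = 0\<close>,
  and the kernel vector vanishes at the last letter of \<open>u\<close>; iterating it along paths
  avoiding that letter gives \<open>surv n \<ge> p_min z0\<^sup>-\<^sup>n\<close>, so the series cannot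
  converge beyond \<open>z0\<close>. Conversely, at the radius of convergence \<open>R\<close> (which exceeds \<open>1\<close>
  because \<open>gf_hit(z) \<rightarrow> 1\<close> as \<open>z \<rightarrow> 1\<close>) the series blows up and the identity forces
  \<open>f_u(R) = 0\<close>. Hence \<open>R\<close> is the least positive root \<open>z0\<close>, and submultiplicativity
  \<open>surv (m + n) \<le> surv m surv n / p_min\<close> turns this into the rate \<open>ln z0\<close>.\<close>

fun path_wt :: "real mat \<Rightarrow> nat \<Rightarrow> nat list \<Rightarrow> real" where
  "path_wt P i [] = 1"
| "path_wt P i (k#v) = P $$ (i,k) * path_wt P k v"

definition word_wt :: "(nat \<Rightarrow> real) \<Rightarrow> real mat \<Rightarrow> nat list \<Rightarrow> real" where
  "word_wt p P w = (case w of [] \<Rightarrow> 1 | i#v \<Rightarrow> p i * path_wt P i v)"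

lemma path_wt_append: "path_wt P i (v1 @ v2) = path_wt P i v1 * path_wt P (last (i#v1)) v2"
  by (induction v1 arbitrary: i) auto

lemma path_wt_eq_prod: "path_wt P i v = (\<Prod>j<length v. P $$ ((i#v)!j, v!j))"
proof (induction v arbitrary: i)
  case Nil then show ?case by simp
next
  case (Cons k v)
  show ?case unfolding path_wt.simps Cons
    by (simp add: prod.lessThan_Suc_shift del: prod.lessThan_Suc)
qed

lemma markov_cyl_eq_word_wt: "markov_cyl p P w = word_wt p P w"
proof (cases w)
  case Nil then show ?thesis by (simp add: markov_cyl_def word_wt_def)
next
  case (Cons i v)
  then show ?thesis by (simp add: markov_cyl_def word_wt_def path_wt_eq_prod)
qed

lemma word_wt_snoc: "w \<noteq> [] \<Longrightarrow> word_wt p P (w @ [j]) = word_wt p P w * P $$ (last w, j)"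
  by (cases w) (auto simp: word_wt_def path_wt_append)

lemma word_wt_append: "w \<noteq> [] \<Longrightarrow> word_wt p P (w @ v) = word_wt p P w * path_wt P (last w) v"
  by (cases w) (auto simp: word_wt_def path_wt_append)

lemma path_wt_drop:
  assumes "1 \<le> k" "k \<le> length xs"
  shows "path_wt P (xs!(k-1)) (drop k xs) = (\<Prod>j\<in>{k..<length xs}. P $$ (xs!(j-1), xs!j))"
proof -
  have "path_wt P (xs!(k-1)) (drop k xs) = (\<Prod>j<length xs - k. P $$ (xs!(j+k-1), xs!(j+k)))"
    unfolding path_wt_eq_prod using assms
    by (intro prod.cong) (auto simp: nth_Cons' add.commute)
  also have "\<dots> = (\<Prod>j\<in>(\<lambda>j. j+k) ` {..<length xs - k}. P $$ (xs!(j-1), xs!j))"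
    by (subst prod.reindex) (auto simp: inj_on_def)
  also have "(\<lambda>j. j+k) ` {..<length xs - k} = {k..<length xs}"
  proof
    show "{k..<length xs} \<subseteq> (\<lambda>j. j+k) ` {..<length xs - k}"
    proof
      fix x assume "x \<in> {k..<length xs}"
      then show "x \<in> (\<lambda>j. j+k) ` {..<length xs - k}" by (auto intro!: image_eqI[of _ _ "x - k"])
    qed
  qed auto
  finally show ?thesis .
qed

lemma autocorr_delta_eq_path_wt:
  "1 \<le> k \<Longrightarrow> k \<le> length u \<Longrightarrow> autocorr_delta P u (length u - k) = path_wt P (u!(k-1)) (drop k u)"
  unfolding autocorr_delta_def using path_wt_drop[of k u] by simp

lemma autocorr_delta_0: "autocorr_delta P u 0 = 1"
  unfolding autocorr_delta_def by simp

lemma word_delta_eq_path_wt: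
  assumes "u \<noteq> []"
  shows "word_delta P u = path_wt P (hd u) (tl u)"
proof -
  have "1 \<le> length u" using assms by (cases u) auto
  then show ?thesis
    using path_wt_drop[of 1 u] assms unfolding word_delta_def by (simp add: hd_conv_nth drop_Suc)
qed

lemma series_Suc_Suc:
  fixes f :: "nat \<Rightarrow> real"
  assumes "summable (\<lambda>n. f (Suc n) * z ^ Suc n)"
  shows "summable (\<lambda>n. f (Suc (Suc n)) * z ^ Suc (Suc n))"
    and "(\<Sum>n. f (Suc (Suc n)) * z ^ Suc (Suc n)) = (\<Sum>n. f (Suc n) * z ^ Suc n) - f 1 * z"
  using assms summable_Suc_iff[where f = "\<lambda>n. f (Suc n) * z ^ Suc n"] suminf_split_head[OF assms]
  by auto

lemma index_mult_mat_sum: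
  assumes "X \<in> carrier_mat n n" "Y \<in> carrier_mat n n" "i < n" "j < n"
  shows "(X * Y) $$ (i,j) = (\<Sum>k<n. X $$ (i,k) * Y $$ (k,j))"
  using assms by (simp add: scalar_prod_def atLeast0LessThan)

lemma index_mult_mat_vec_sum:
  assumes "X \<in> carrier_mat n n" "v \<in> carrier_vec n" "i < n"
  shows "(X *\<^sub>v v) $ i = (\<Sum>k<n. X $$ (i,k) * v $ k)"
  using assms by (simp add: scalar_prod_def atLeast0LessThan)

lemma funpow_shift: "(shift ^^ i) x = (\<lambda>n. x (n + i))"
  by (induction i arbitrary: x) (auto simp: shift_def)

lemma continuous_on_det:
  fixes M :: "real \<Rightarrow> real mat"
  assumes car: "\<And>z. M z \<in> carrier_mat n n"
    and ce: "\<And>i j. i < n \<Longrightarrow> j < n \<Longrightarrow> continuous_on UNIV (\<lambda>z. M z $$ (i,j))"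
  shows "continuous_on UNIV (\<lambda>z. det (M z))"
proof -
  have e: "(\<lambda>z. det (M z)) = (\<lambda>z. \<Sum>p\<in>{p. p permutes {0..<n}}. signof p * (\<Prod>i=0..<n. M z $$ (i, p i)))"
    by (rule ext) (rule det_def'[OF car])
  show ?thesis unfolding e
  proof (intro continuous_on_sum continuous_on_mult continuous_on_const continuous_on_prod)
    fix p i assume p: "p \<in> {p. p permutes {0..<n}}" and i: "i \<in> {0..<n}"
    then have "p i < n" using permutes_in_image[of p "{0..<n}" i] by auto
    then show "continuous_on UNIV (\<lambda>z. M z $$ (i, p i))" using ce i by auto
  qed
qed

lemma continuous_on_adj_mat_index:
  fixes M :: "real \<Rightarrow> real mat"
  assumes car: "\<And>z. M z \<in> carrier_mat n n"
    and ce: "\<And>i j. i < n \<Longrightarrow> j < n \<Longrightarrow> continuous_on UNIV (\<lambda>z. M z $$ (i,j))"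
    and ij: "i < n" "j < n"
  shows "continuous_on UNIV (\<lambda>z. adj_mat (M z) $$ (i,j))"
proof -
  have adj: "adj_mat (M z) $$ (i,j) = (-1)^(j+i) * det (mat_delete (M z) j i)" for z
    using car[of z] ij by (simp add: adj_mat_def cofactor_def)
  have "continuous_on UNIV (\<lambda>z. mat_delete (M z) j i $$ (i',j'))" if "i' < n - 1" "j' < n - 1" for i' j'
  proof -
    have "mat_delete (M z) j i $$ (i',j') = M z $$ (if i' < j then i' else Suc i', if j' < i then j' else Suc j')"
      for z using that car[of z] unfolding mat_delete_def by auto
    then show ?thesis using ce[of "if i' < j then i' else Suc i'" "if j' < i then j' else Suc j'"] that
      by auto
  qed
  then show ?thesis
    unfolding adj by (intro continuous_intros continuous_on_det[OF mat_delete_carrier[OF car]])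
qed

lemma sum_if_eq_mult:
  fixes g :: "nat \<Rightarrow> real"
  shows "i < n \<Longrightarrow> (\<Sum>j<n. (if i = j then 1 else 0) * g j) = g i"
  by (simp add: if_distrib[of "\<lambda>c. c * _"] cong: if_cong)

lemma insert_index_less: "j' < (n::nat) - 1 \<Longrightarrow> insert_index k j' < n \<and> insert_index k j' \<noteq> k"
  by (auto simp: insert_index_def)

lemma delete_index_less: "j < n \<Longrightarrow> j \<noteq> k \<Longrightarrow> k < n \<Longrightarrow> delete_index k j < n - 1"
  by (auto simp: delete_index_def)

lemma sum_skip_index:
  fixes n :: nat
  assumes k: "k < n"
  shows "(\<Sum>j<n. if j = k then 0 else g j) = (\<Sum>j'<n-1. g (insert_index k j'))"
proof -
  have "(\<Sum>j<n. if j = k then 0 else g j) = (\<Sum>j\<in>{j\<in>{..<n}. j \<noteq> k}. g j)"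
    unfolding sum.inter_filter[OF finite_lessThan] by (rule sum.cong) auto
  also have "\<dots> = (\<Sum>j'<n-1. g (insert_index k j'))"
  proof (rule sum.reindex_bij_witness[where i = "insert_index k" and j = "delete_index k"])
    fix j assume "j \<in> {j\<in>{..<n}. j \<noteq> k}"
    then have j: "j < n" "j \<noteq> k" by auto
    show "insert_index k (delete_index k j) = j" using j by (simp add: insert_delete_index)
    show "delete_index k j \<in> {..<n-1}" using delete_index_less[OF j k] by simp
    show "g (insert_index k (delete_index k j)) = g j" using j by (simp add: insert_delete_index)
  next
    fix b assume "b \<in> {..<n-1}"
    then have b: "b < n - 1" by simp
    show "delete_index k (insert_index k b) = b" by simp
    show "insert_index k b \<in> {j\<in>{..<n}. j \<noteq> k}" using insert_index_less[OF b, of k] by simp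
  qed
  finally show ?thesis .
qed
section \<open>Occurrences of a pattern in a word\<close>

locale pattern =
  fixes u :: "nat list"
  assumes r_ge2: "length u \<ge> 2"
begin

abbreviation r where "r \<equiv> length u"

lemma u_nonempty: "u \<noteq> []"
  using r_ge2 by auto

lemma power_r: "(z::'a::monoid_mult) ^ r = z ^ (r - 1) * z"
proof -
  have "r = Suc (r - 1)" using r_ge2 by simp
  then show ?thesis by (metis power_Suc2)
qed

definition occurs_at :: "nat list \<Rightarrow> nat \<Rightarrow> bool" where
  "occurs_at w i \<longleftrightarrow> i + r \<le> length w \<and> take r (drop i w) = u"

definition avoids :: "nat list \<Rightarrow> bool" where
  "avoids w \<longleftrightarrow> (\<forall>i. \<not> occurs_at w i)"

definition first_occ :: "nat list \<Rightarrow> nat" where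
  "first_occ w = (LEAST i. occurs_at (w @ u) i)"

lemma occurs_at_take: "occurs_at (take m w) i \<longleftrightarrow> occurs_at w i \<and> i + r \<le> m"
  unfolding occurs_at_def by (auto simp: drop_take min_def)

lemma occurs_at_butlast: "occurs_at (butlast w) i \<longleftrightarrow> occurs_at w i \<and> i + r < length w"
  using occurs_at_take[of "length w - 1" w i] r_ge2 by (auto simp: butlast_conv_take occurs_at_def)

lemma occurs_at_append: "i + r \<le> length w \<Longrightarrow> occurs_at (w @ v) i \<longleftrightarrow> occurs_at w i"
  using occurs_at_take[of "length w" "w @ v" i] by auto

lemma occurs_at_append_u: "occurs_at (w @ u) (length w)"
  unfolding occurs_at_def by simp

lemma avoids_take: "avoids w \<Longrightarrow> avoids (take m w)"
  unfolding avoids_def using occurs_at_take by auto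

lemma avoids_butlast: "avoids w \<Longrightarrow> avoids (butlast w)"
  unfolding avoids_def using occurs_at_butlast by auto

lemma avoids_short: "length w < r \<Longrightarrow> avoids w"
  unfolding avoids_def occurs_at_def by auto

lemma avoids_appendD: "avoids (w1 @ w2) \<Longrightarrow> avoids w1 \<and> avoids w2"
proof
  assume h: "avoids (w1 @ w2)"
  show "avoids w1" using avoids_take[OF h, of "length w1"] by simp
  have "occurs_at w2 i \<Longrightarrow> occurs_at (w1 @ w2) (length w1 + i)" for i
    unfolding occurs_at_def by simp
  then show "avoids w2" using h unfolding avoids_def by blast
qed

lemma avoids_Cons_if_last_notin:
  assumes "last u \<notin> set v"
  shows "avoids (i # v)"
  unfolding avoids_def
proof
  fix q
  show "\<not> occurs_at (i # v) q"
  proof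
    assume "occurs_at (i # v) q"
    then have u_eq: "take r (drop q (i # v)) = u" unfolding occurs_at_def by auto
    have "last u \<in> set (drop 1 u)"
      using r_ge2 last_in_set[of "drop 1 u"] by (simp add: last_drop)
    also have "drop 1 u = take (r - 1) (drop q v)"
      by (subst u_eq[symmetric]) (simp add: drop_take drop_Suc[symmetric] drop_drop)
    also have "set \<dots> \<subseteq> set v" by (meson in_set_dropD in_set_takeD subsetI)
    finally show False using assms by simp
  qed
qed

lemma occurs_at_end_last:
  assumes "occurs_at w (length w - r)"
  shows "last w = last u"
proof -
  have "r \<le> length w" using assms unfolding occurs_at_def by auto
  then have "drop (length w - r) w = u" using assms unfolding occurs_at_def by auto
  moreover have "last (drop (length w - r) w) = last w"
    using \<open>r \<le> length w\<close> r_ge2 by (simp add: last_drop)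
  ultimately show ?thesis by simp
qed

lemma occurs_at_end_if_not_avoids:
  assumes "avoids (butlast w)" and "\<not> avoids w"
  shows "occurs_at w (length w - r)"
proof -
  obtain i where i: "occurs_at w i" using assms(2) unfolding avoids_def by auto
  then have "\<not> i + r < length w" using assms(1) occurs_at_butlast unfolding avoids_def by auto
  with i have "i = length w - r" unfolding occurs_at_def by auto
  with i show ?thesis by simp
qed

lemma first_occ:
  assumes "avoids w"
  shows "occurs_at (w @ u) (first_occ w)" "first_occ w \<le> length w" "length w < first_occ w + r"
    "\<And>i. i < first_occ w \<Longrightarrow> \<not> occurs_at (w @ u) i"
proof -
  show occ: "occurs_at (w @ u) (first_occ w)"
    unfolding first_occ_def using occurs_at_append_u by (rule LeastI)
  show "first_occ w \<le> length w" unfolding first_occ_def using occurs_at_append_u by (rule Least_le)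
  show "\<And>i. i < first_occ w \<Longrightarrow> \<not> occurs_at (w @ u) i"
    unfolding first_occ_def using not_less_Least by blast
  show "length w < first_occ w + r"
  proof (rule ccontr)
    assume "\<not> length w < first_occ w + r"
    then have "occurs_at w (first_occ w)" using occurs_at_append occ by auto
    then show False using assms unfolding avoids_def by auto
  qed
qed

text \<open>Two occurrences of \<open>u\<close> in \<open>w @ u\<close>, at \<open>i\<close> and at \<open>length w\<close>, make
  \<open>length w - i\<close> a period of \<open>u\<close>.\<close>

lemma autocorr_c_if_occurs_at_append:
  assumes occ: "occurs_at (w @ u) i" and i: "i \<le> length w"
  shows "autocorr_c u (length w - i)"
proof -
  let ?s = "length w - i"
  have u_eq: "take r (drop i (w @ u)) = u" using occ unfolding occurs_at_def by blast
  have "drop ?s u = drop ?s (take r (drop i (w @ u)))" by (simp only: u_eq)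
  also have "\<dots> = take (r - ?s) (drop (?s + i) (w @ u))" by (simp only: drop_take drop_drop)
  also have "\<dots> = take (r - ?s) u" using i by simp
  finally show ?thesis unfolding autocorr_c_def .
qed

lemma first_hit_append_take:
  assumes av: "avoids w" and k: "first_occ w + r = length w + k"
  shows "avoids (butlast (w @ take k u))" and "occurs_at (w @ take k u) (first_occ w)"
proof -
  have k_bounds: "1 \<le> k" "k \<le> r" using first_occ[OF av] k by auto
  have eq: "w @ take k u = take (length w + k) (w @ u)" by simp
  show "occurs_at (w @ take k u) (first_occ w)"
    unfolding eq occurs_at_take using first_occ(1)[OF av] k by simp
  have "butlast (take (length w + k) (w @ u)) = take (length w + k - 1) (w @ u)"
    using k_bounds by (intro butlast_take) simp
  then have "butlast (w @ take k u) = take (length w + k - 1) (w @ u)" by (simp only: eq)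
  moreover have "\<not> (occurs_at (w @ u) i \<and> i + r \<le> length w + k - 1)" for i
  proof -
    have "i + r \<le> length w + k - 1 \<Longrightarrow> i < first_occ w" using k k_bounds by linarith
    then show ?thesis using first_occ(4)[OF av, of i] by blast
  qed
  ultimately show "avoids (butlast (w @ take k u))"
    unfolding avoids_def by (metis occurs_at_take)
qed

lemma first_occ_take:
  assumes av: "avoids (butlast v)" and occ: "occurs_at v (length v - r)"
    and n: "n < length v" "length v \<le> n + r" and per: "autocorr_c u (r - (length v - n))"
  shows "v = take n v @ take (length v - n) u" and "avoids (take n v)"
    and "first_occ (take n v) = length v - r"
proof -
  let ?k = "length v - n" and ?w = "take n v"
  have r_le: "r \<le> length v" and tail: "drop (length v - r) v = u"
    using occ unfolding occurs_at_def by auto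
  have "drop n v = drop (r - ?k) (drop (length v - r) v)" using n r_le by (simp add: drop_drop)
  also have "\<dots> = drop (r - ?k) u" by (simp only: tail)
  also have "\<dots> = take ?k u" using per n unfolding autocorr_c_def by simp
  finally show v_eq: "v = ?w @ take ?k u" by (metis append_take_drop_id)
  have "?w = take n (butlast v)" using n by (auto simp: butlast_conv_take min_def)
  then show "avoids ?w" using avoids_take[OF av] by simp
  have pre: "take (length v) (?w @ u) = v" by (subst (3) v_eq) (simp add: min_def)
  have "occurs_at (take (length v) (?w @ u)) (length v - r)" using occ by (simp only: pre)
  then have "occurs_at (?w @ u) (length v - r)" using occurs_at_take by blast
  moreover have "\<not> occurs_at (?w @ u) i" if "i < length v - r" for i
  proof
    assume "occurs_at (?w @ u) i"
    moreover have "i + r \<le> length v - 1" using that by linarith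
    ultimately have "occurs_at (take (length v - 1) (?w @ u)) i"
      using occurs_at_take by blast
    moreover have "take (length v - 1) (?w @ u) = butlast v"
      by (metis pre butlast_conv_take diff_le_self min.absorb1 take_take)
    ultimately show False using av unfolding avoids_def by simp
  qed
  ultimately show "first_occ ?w = length v - r"
    unfolding first_occ_def by (intro Least_equality) (auto simp: not_less[symmetric])
qed

lemma autocorr_c_0: "autocorr_c u 0"
  unfolding autocorr_c_def by simp

lemma autocorr_c_last: "autocorr_c u (r - 1) \<longleftrightarrow> hd u = last u"
proof -
  have "drop (r - 1) u = [last u]"
    using u_nonempty Cons_nth_drop_Suc[of "r - 1" u] by (simp add: last_conv_nth)
  moreover have "take (r - (r - 1)) u = [hd u]"
    using r_ge2 by (cases u) auto
  ultimately show ?thesis unfolding autocorr_c_def by auto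
qed

lemma tau_reindex: "tau P u z = (\<Sum>k\<in>{1..r}. if autocorr_c u (r-k) then autocorr_delta P u (r-k) * z ^ (r-k) else 0)"
proof -
  have "tau P u z = (\<Sum>s<r. if autocorr_c u s then autocorr_delta P u s * z ^ s else 0)"
    unfolding tau_def autocorr_c_def autocorr_delta_def by (rule sum.cong) auto
  also have "\<dots> = (\<Sum>k\<in>{1..r}. if autocorr_c u (r-k) then autocorr_delta P u (r-k) * z ^ (r-k) else 0)"
    by (rule sum.reindex_bij_witness[where i = "\<lambda>k. r - k" and j = "\<lambda>s. r - s"]) auto
  finally show ?thesis .
qed

end

section \<open>Words avoiding the hole and the renewal equations\<close>

locale markov_hole = pattern u for u :: "nat list" +
  fixes N :: nat and A P :: "real mat" and p :: "nat \<Rightarrow> real"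
  assumes A01: "zero_one_mat N A" and Airr: "irreducible_mat N A"
    and Pst: "row_stochastic_compatible N A P" and pst: "stationary_vector N P p"
    and u_states: "set u \<subseteq> {..<N}" and u_allowed: "allowed N A u"
begin

definition words :: "nat \<Rightarrow> nat list set" where
  "words n = {w. set w \<subseteq> {..<N} \<and> length w = n}"

definition surv :: "nat \<Rightarrow> real" where
  "surv n = (\<Sum>w\<in>{w\<in>words n. avoids w}. word_wt p P w)"

definition surv_last :: "nat \<Rightarrow> nat \<Rightarrow> real" where
  "surv_last n j = (\<Sum>w\<in>{w\<in>words n. avoids w \<and> last w = j}. word_wt p P w)"

definition first_hits :: "nat \<Rightarrow> nat list set" where
  "first_hits n = {w\<in>words n. avoids (butlast w) \<and> occurs_at w (n - r)}"

definition first_hit :: "nat \<Rightarrow> real" where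
  "first_hit n = (\<Sum>w\<in>first_hits n. word_wt p P w)"

abbreviation delta_u :: real where "delta_u \<equiv> word_delta P u"

lemma P_carrier: "P \<in> carrier_mat N N"
  using Pst unfolding row_stochastic_compatible_def by auto
lemma P_nonneg: "i < N \<Longrightarrow> j < N \<Longrightarrow> P $$ (i,j) \<ge> 0"
  using Pst unfolding row_stochastic_compatible_def by auto
lemma P_rowsum: "i < N \<Longrightarrow> (\<Sum>j<N. P $$ (i,j)) = 1"
  using Pst unfolding row_stochastic_compatible_def by auto
lemma P_pos_iff: "i < N \<Longrightarrow> j < N \<Longrightarrow> P $$ (i,j) > 0 \<longleftrightarrow> A $$ (i,j) = 1"
  using Pst unfolding row_stochastic_compatible_def by auto
lemma p_nonneg: "i < N \<Longrightarrow> p i \<ge> 0"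
  using pst unfolding stationary_vector_def by auto
lemma p_sum: "(\<Sum>i<N. p i) = 1"
  using pst unfolding stationary_vector_def by auto
lemma p_stat: "j < N \<Longrightarrow> (\<Sum>i<N. p i * P $$ (i,j)) = p j"
  using pst unfolding stationary_vector_def by auto
lemma A_01: "i < N \<Longrightarrow> j < N \<Longrightarrow> A $$ (i,j) = 0 \<or> A $$ (i,j) = 1"
  using A01 unfolding zero_one_mat_def by auto
lemma A_carrier: "A \<in> carrier_mat N N"
  using A01 unfolding zero_one_mat_def by auto

lemma last_u_less: "last u < N"
  using u_states last_in_set[OF u_nonempty] by auto
lemma hd_u_less: "hd u < N"
  using u_states hd_in_set[OF u_nonempty] by auto

lemma finite_words [simp]: "finite (words n)"
  unfolding words_def by (rule finite_lists_length_eq) auto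

lemma path_wt_nonneg: "i < N \<Longrightarrow> set v \<subseteq> {..<N} \<Longrightarrow> path_wt P i v \<ge> 0"
  by (induction v arbitrary: i) (auto intro!: mult_nonneg_nonneg P_nonneg)

lemma word_wt_nonneg: "set w \<subseteq> {..<N} \<Longrightarrow> word_wt p P w \<ge> 0"
  by (cases w) (auto simp: word_wt_def intro!: mult_nonneg_nonneg p_nonneg path_wt_nonneg)

lemma surv_nonneg: "surv n \<ge> 0"
  unfolding surv_def words_def by (auto intro!: sum_nonneg word_wt_nonneg)
lemma surv_last_nonneg: "surv_last n j \<ge> 0"
  unfolding surv_last_def words_def by (auto intro!: sum_nonneg word_wt_nonneg)
lemma first_hit_nonneg: "first_hit n \<ge> 0"
  unfolding first_hit_def first_hits_def words_def by (auto intro!: sum_nonneg word_wt_nonneg)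

lemma sum_surv_last:
  assumes "n \<ge> 1"
  shows "(\<Sum>i<N. surv_last n i * g i) = (\<Sum>w\<in>{w\<in>words n. avoids w}. word_wt p P w * g (last w))"
proof -
  let ?S = "{w\<in>words n. avoids w}"
  have "last w \<in> {..<N}" if "w \<in> ?S" for w
  proof -
    have "w \<noteq> []" "set w \<subseteq> {..<N}" using that assms by (auto simp: words_def)
    then show ?thesis using last_in_set by blast
  qed
  then have "(\<Sum>w\<in>?S. word_wt p P w * g (last w))
      = (\<Sum>i<N. \<Sum>w\<in>{w\<in>?S. last w = i}. word_wt p P w * g (last w))"
    by (intro sum.group[symmetric]) auto
  also have "\<dots> = (\<Sum>i<N. surv_last n i * g i)"
    unfolding surv_last_def sum_distrib_right by (intro sum.cong refl) auto
  finally show ?thesis by simp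
qed

lemma surv_eq_sum_surv_last: "n \<ge> 1 \<Longrightarrow> surv n = (\<Sum>j<N. surv_last n j)"
  using sum_surv_last[where g = "\<lambda>_. 1"] by (simp add: surv_def)

lemma surv_last_le_surv: "n \<ge> 1 \<Longrightarrow> j < N \<Longrightarrow> surv_last n j \<le> surv n"
  using surv_eq_sum_surv_last[of n] surv_last_nonneg
  by (metis finite_lessThan lessThan_iff member_le_sum)

lemma snoc_image_avoids:
  assumes "j < N"
  shows "(\<lambda>w. w @ [j]) ` {w\<in>words n. avoids w} = {w\<in>words (Suc n). avoids (butlast w) \<and> last w = j}"
proof (intro equalityI subsetI)
  fix w assume w: "w \<in> {w\<in>words (Suc n). avoids (butlast w) \<and> last w = j}"
  then have "w \<noteq> []" by (auto simp: words_def)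
  with w have "w = butlast w @ [j]" by (simp add: snoc_eq_iff_butlast eq_commute[of w])
  moreover have "butlast w \<in> {w\<in>words n. avoids w}"
    using w by (auto simp: words_def dest: in_set_butlastD)
  ultimately show "w \<in> (\<lambda>w. w @ [j]) ` {w\<in>words n. avoids w}" by (rule image_eqI)
qed (use assms in \<open>auto simp: words_def\<close>)

lemma first_hits_last: "w \<in> first_hits n \<Longrightarrow> last w = last u"
  unfolding first_hits_def words_def using occurs_at_end_last by fastforce

lemma avoids_butlast_split:
  "{w\<in>words n. avoids (butlast w) \<and> last w = j}
     = {w\<in>words n. avoids w \<and> last w = j} \<union> {w\<in>first_hits n. last w = j}"
proof -
  have "occurs_at w (n - r)" if "w \<in> words n" "avoids (butlast w)" "\<not> avoids w" for w
    using occurs_at_end_if_not_avoids[OF that(2,3)] that(1) by (simp add: words_def)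
  then show ?thesis unfolding first_hits_def using avoids_butlast by blast
qed

text \<open>The first renewal equation: appending a letter to a word avoiding \<open>u\<close> either keeps
  it avoiding or completes a first occurrence of \<open>u\<close>.\<close>

lemma surv_last_rec:
  assumes n: "n \<ge> 1" and j: "j < N"
  shows "(\<Sum>i<N. surv_last n i * P $$ (i,j))
       = surv_last (Suc n) j + (if j = last u then first_hit (Suc n) else 0)"
proof -
  let ?S = "{w\<in>words n. avoids w}"
  have "(\<Sum>i<N. surv_last n i * P $$ (i,j)) = (\<Sum>w\<in>?S. word_wt p P (w @ [j]))"
    unfolding sum_surv_last[OF n]
    by (intro sum.cong refl) (use n in \<open>auto simp: words_def word_wt_snoc Suc_le_eq\<close>)
  also have "\<dots> = (\<Sum>w\<in>(\<lambda>w. w @ [j]) ` ?S. word_wt p P w)"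
    by (simp add: sum.reindex inj_on_def)
  also have "\<dots> = (\<Sum>w\<in>{w\<in>words (Suc n). avoids w \<and> last w = j}. word_wt p P w)
      + (\<Sum>w\<in>{w\<in>first_hits (Suc n). last w = j}. word_wt p P w)"
    unfolding snoc_image_avoids[OF j] avoids_butlast_split
    by (rule sum.union_disjoint) (auto simp: first_hits_def avoids_def)
  also have "{w\<in>first_hits (Suc n). last w = j} = (if j = last u then first_hits (Suc n) else {})"
    using first_hits_last by auto
  finally show ?thesis unfolding surv_last_def first_hit_def by simp
qed

lemma surv_Suc: "n \<ge> 1 \<Longrightarrow> surv (Suc n) = surv n - first_hit (Suc n)"
proof -
  assume n: "n \<ge> 1"
  have "surv n = (\<Sum>i<N. surv_last n i * (\<Sum>j<N. P $$ (i,j)))"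
    using surv_eq_sum_surv_last[OF n] P_rowsum by simp
  also have "\<dots> = (\<Sum>j<N. \<Sum>i<N. surv_last n i * P $$ (i,j))"
    by (subst sum.swap) (simp add: sum_distrib_left)
  also have "\<dots> = (\<Sum>j<N. surv_last (Suc n) j + (if j = last u then first_hit (Suc n) else 0))"
    using surv_last_rec[OF n] by simp
  also have "\<dots> = surv (Suc n) + first_hit (Suc n)"
    using surv_eq_sum_surv_last[of "Suc n"] last_u_less by (simp add: sum.distrib)
  finally show ?thesis by simp
qed

lemma surv_last_1: "j < N \<Longrightarrow> surv_last 1 j = p j"
proof -
  assume j: "j < N"
  have "{w\<in>words 1. avoids w \<and> last w = j} = {[j]}"
    using j r_ge2 by (auto simp: words_def avoids_short length_Suc_conv)
  then show ?thesis unfolding surv_last_def by (simp add: word_wt_def)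
qed

lemma surv_1: "surv 1 = 1"
  using surv_eq_sum_surv_last[of 1] surv_last_1 p_sum by simp

lemma surv_le_1: "n \<ge> 1 \<Longrightarrow> surv n \<le> 1"
proof (induction n rule: nat_induct_at_least)
  case base then show ?case using surv_1 by simp
next
  case (Suc n) then show ?case using surv_Suc[of n] first_hit_nonneg[of "Suc n"] by simp
qed

lemma surv_antimono:
  assumes "1 \<le> m" and "m \<le> n"
  shows "surv n \<le> surv m"
  using assms(2)
proof (induction n rule: dec_induct)
  case (step n)
  then show ?case using surv_Suc[of n] first_hit_nonneg[of "Suc n"] assms(1) by simp
qed simp

lemma first_hit_le_surv: "n \<ge> 1 \<Longrightarrow> first_hit (Suc n) \<le> surv n"
  using surv_Suc[of n] surv_nonneg[of "Suc n"] by simp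

lemma first_hit_short: "n < r \<Longrightarrow> first_hit n = 0"
proof -
  assume "n < r"
  then have "first_hits n = {}" unfolding first_hits_def occurs_at_def words_def by auto
  then show ?thesis unfolding first_hit_def by simp
qed

lemma first_hit_r: "first_hit r = p (hd u) * delta_u"
proof -
  have "first_hits r = {u}"
    using u_states r_ge2 by (auto simp: first_hits_def occurs_at_def words_def intro!: avoids_short)
  moreover have "word_wt p P u = p (hd u) * delta_u"
    using r_ge2 word_delta_eq_path_wt[of u P] by (cases u) (auto simp: word_wt_def)
  ultimately show ?thesis unfolding first_hit_def by simp
qed

lemma word_wt_append_u:
  assumes "w \<noteq> []"
  shows "word_wt p P (w @ u) = word_wt p P w * P $$ (last w, hd u) * delta_u"
proof -
  have "path_wt P (last w) u = P $$ (last w, hd u) * delta_u"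
    using r_ge2 word_delta_eq_path_wt[of u P] by (cases u) auto
  then show ?thesis using word_wt_append[OF assms] by simp
qed

lemma word_wt_append_u_split:
  assumes k: "k \<in> {1..r}"
  shows "word_wt p P (w @ u) = word_wt p P (w @ take k u) * autocorr_delta P u (r - k)"
proof -
  have "take k u \<noteq> []" using k r_ge2 by auto
  then have "last (w @ take k u) = last (take k u)" by simp
  also have "\<dots> = u ! (k - 1)" using k \<open>take k u \<noteq> []\<close> by (auto simp: last_conv_nth min_def)
  finally have "last (w @ take k u) = u ! (k - 1)" .
  moreover have "path_wt P (u ! (k - 1)) (drop k u) = autocorr_delta P u (r - k)"
    using autocorr_delta_eq_path_wt[of k] k by simp
  ultimately show ?thesis
    using word_wt_append[where w = "w @ take k u" and v = "drop k u"] \<open>take k u \<noteq> []\<close> by simp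
qed

text \<open>Split the avoiding words \<open>w\<close> by where \<open>u\<close> first occurs in \<open>w @ u\<close>: if it
  ends \<open>k\<close> letters into the appended copy, then \<open>r - k\<close> is a period of \<open>u\<close> and
  \<open>w @ take k u\<close> is a word that hits \<open>u\<close> for the first time at length \<open>n + k\<close>.\<close>

lemma sum_append_u_first_occ:
  assumes k: "k \<in> {1..r}"
  shows "(\<Sum>w\<in>{w\<in>words n. avoids w \<and> first_occ w + r = n + k}. word_wt p P (w @ u))
       = (if autocorr_c u (r - k) then autocorr_delta P u (r - k) * first_hit (n + k) else 0)"
proof (cases "autocorr_c u (r - k)")
  case False
  have "autocorr_c u (r - k)" if w: "w \<in> words n" "avoids w" "first_occ w + r = n + k" for w
  proof -
    have "length w - first_occ w = r - k"
      using first_occ(2)[OF w(2)] w(3) w(1) unfolding words_def by simp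
    then show ?thesis using autocorr_c_if_occurs_at_append[OF first_occ(1,2)[OF w(2)]] by simp
  qed
  with False have "{w\<in>words n. avoids w \<and> first_occ w + r = n + k} = {}" by blast
  with False show ?thesis by (simp only: sum.empty if_False)
next
  case True
  have "(\<Sum>w\<in>{w\<in>words n. avoids w \<and> first_occ w + r = n + k}. word_wt p P (w @ u))
      = (\<Sum>v\<in>first_hits (n + k). autocorr_delta P u (r - k) * word_wt p P v)"
  proof (rule sum.reindex_bij_witness[where i = "take n" and j = "\<lambda>w. w @ take k u"])
    fix w assume "w \<in> {w\<in>words n. avoids w \<and> first_occ w + r = n + k}"
    then have len: "length w = n" and av: "avoids w" and ws: "set w \<subseteq> {..<N}"
      and fo: "first_occ w + r = length w + k" unfolding words_def by auto
    show "take n (w @ take k u) = w" using len by simp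
    have "first_occ w = n + k - r" using fo len by simp
    then show "w @ take k u \<in> first_hits (n + k)"
      using first_hit_append_take[OF av fo] len k ws u_states
      by (auto simp: first_hits_def words_def dest: in_set_takeD)
    show "autocorr_delta P u (r - k) * word_wt p P (w @ take k u) = word_wt p P (w @ u)"
      using word_wt_append_u_split[OF k] by simp
  next
    fix v assume "v \<in> first_hits (n + k)"
    then have len: "length v = n + k" and av: "avoids (butlast v)"
      and occ: "occurs_at v (length v - r)" and vs: "set v \<subseteq> {..<N}"
      unfolding first_hits_def words_def by auto
    note split = first_occ_take[OF av occ, of n] 
    show "take n v @ take k u = v" using split(1) len k True by simp
    show "take n v \<in> {w\<in>words n. avoids w \<and> first_occ w + r = n + k}"
      using split(2,3) len k True vs occ
      by (auto simp: words_def occurs_at_def dest: in_set_takeD)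
  qed
  also have "\<dots> = autocorr_delta P u (r - k) * first_hit (n + k)"
    unfolding first_hit_def by (simp add: sum_distrib_left)
  finally show ?thesis using True by simp
qed

lemma append_u_rec:
  "(\<Sum>w\<in>{w\<in>words n. avoids w}. word_wt p P (w @ u))
     = (\<Sum>k\<in>{1..r}. if autocorr_c u (r - k) then autocorr_delta P u (r - k) * first_hit (n + k) else 0)"
proof -
  let ?S = "{w\<in>words n. avoids w}"
  have key: "first_occ w + r - n \<in> {1..r}" "first_occ w + r = n + (first_occ w + r - n)" if "w \<in> ?S" for w
    using that first_occ(2,3)[of w] unfolding words_def by auto
  have "(\<Sum>w\<in>?S. word_wt p P (w @ u))
      = (\<Sum>k\<in>{1..r}. \<Sum>w\<in>{w\<in>?S. first_occ w + r - n = k}. word_wt p P (w @ u))"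
    by (rule sum.group[symmetric]) (use key in auto)
  also have "\<dots> = (\<Sum>k\<in>{1..r}. \<Sum>w\<in>{w\<in>words n. avoids w \<and> first_occ w + r = n + k}. word_wt p P (w @ u))"
    by (intro sum.cong refl arg_cong[where f = "\<lambda>S. sum _ S"]) (use key in force)
  finally show ?thesis by (simp add: sum_append_u_first_occ)
qed

text \<open>The second renewal equation: appending \<open>u\<close> to a word avoiding \<open>u\<close>.\<close>

lemma surv_last_hd_rec:
  assumes n: "n \<ge> 1"
  shows "(surv_last (Suc n) (hd u) + (if hd u = last u then first_hit (Suc n) else 0)) * delta_u
       = (\<Sum>k\<in>{1..r}. if autocorr_c u (r - k) then autocorr_delta P u (r - k) * first_hit (n + k) else 0)"
proof -
  have "(\<Sum>i<N. surv_last n i * P $$ (i, hd u)) * delta_u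
      = (\<Sum>w\<in>{w\<in>words n. avoids w}. word_wt p P (w @ u))"
    unfolding sum_surv_last[OF n] sum_distrib_right
    by (intro sum.cong refl) (use n in \<open>auto simp: words_def word_wt_append_u Suc_le_eq\<close>)
  then show ?thesis using append_u_rec surv_last_rec[OF n hd_u_less] by simp
qed

section \<open>Consequences of irreducibility\<close>

lemma pow_A_carrier: "A ^\<^sub>m n \<in> carrier_mat N N"
  using A_carrier by (metis pow_mat_dim_square carrier_matD carrier_matI)

lemma pow_A_Suc_pos_ex:
  assumes ij: "i < N" "j < N" and pos: "(A ^\<^sub>m Suc n) $$ (i,j) > 0"
  obtains k where "k < N" "(A ^\<^sub>m n) $$ (i,k) > 0" "A $$ (k,j) = 1"
proof -
  have "(A ^\<^sub>m Suc n) $$ (i,j) = (\<Sum>k<N. (A ^\<^sub>m n) $$ (i,k) * A $$ (k,j))"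
    using index_mult_mat_sum[OF pow_A_carrier A_carrier ij] by simp
  have "\<exists>k<N. (A ^\<^sub>m n) $$ (i,k) * A $$ (k,j) > 0"
  proof (rule ccontr)
    assume "\<not> ?thesis"
    then have "\<forall>k<N. (A ^\<^sub>m n) $$ (i,k) * A $$ (k,j) \<le> 0" by (meson not_le)
    then have "(\<Sum>k<N. (A ^\<^sub>m n) $$ (i,k) * A $$ (k,j)) \<le> 0" by (intro sum_nonpos) simp
    with pos \<open>(A ^\<^sub>m Suc n) $$ (i,j) = _\<close> show False by linarith
  qed
  then obtain k where k: "k < N" "(A ^\<^sub>m n) $$ (i,k) * A $$ (k,j) > 0" by blast
  then have "A $$ (k,j) = 1" using A_01[of k j] ij by auto
  with k show thesis using that by simp
qed

lemma pred_closed_contains_all: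
  assumes cl: "\<And>k i. k \<in> Z \<Longrightarrow> k < N \<Longrightarrow> i < N \<Longrightarrow> P $$ (i,k) > 0 \<Longrightarrow> i \<in> Z"
    and j: "j < N" "j \<in> Z" and i: "i < N"
  shows "i \<in> Z"
proof -
  have reach: "i \<in> Z" if "(A ^\<^sub>m n) $$ (i,j) > 0" "j < N" "j \<in> Z" for n j
    using that
  proof (induction n arbitrary: j)
    case 0
    then show ?case using i A_carrier by (cases "i = j") auto
  next
    case (Suc n)
    obtain k where k: "k < N" "(A ^\<^sub>m n) $$ (i,k) > 0" "A $$ (k,j) = 1"
      using pow_A_Suc_pos_ex[OF i Suc.prems(2,1)] .
    then have "k \<in> Z" using cl Suc.prems(2,3) P_pos_iff by blast
    with k Suc.IH show ?case by blast
  qed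
  obtain n where "(A ^\<^sub>m n) $$ (i,j) > 0" using Airr i j unfolding irreducible_mat_def by blast
  then show ?thesis using reach j by blast
qed

lemma N_pos: "N > 0" using hd_u_less by simp

lemma p_pos: "i < N \<Longrightarrow> p i > 0"
proof (rule ccontr)
  assume i: "i < N" and "\<not> p i > 0"
  then have pi: "p i = 0" using p_nonneg[of i] by linarith
  let ?Z = "{k. p k = 0}"
  have "k \<in> ?Z" if k: "k < N" for k
  proof (rule pred_closed_contains_all[of ?Z i k])
    fix k' i' assume h: "k' \<in> ?Z" "k' < N" "i' < N" "P $$ (i',k') > 0"
    have "(\<Sum>i<N. p i * P $$ (i,k')) = 0" using p_stat[OF h(2)] h(1) by simp
    then have "\<forall>i\<in>{..<N}. p i * P $$ (i,k') = 0"
      by (subst sum_nonneg_eq_0_iff[symmetric]) (auto intro!: mult_nonneg_nonneg p_nonneg P_nonneg h(2))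
    then have "p i' * P $$ (i',k') = 0" using h by auto
    then show "i' \<in> ?Z" using h by simp
  qed (use i pi k in auto)
  then have "(\<Sum>k<N. p k) = 0" by simp
  then show False using p_sum by simp
qed

definition p_min :: real where "p_min = Min (p ` {..<N})"

lemma p_min_pos: "p_min > 0"
  unfolding p_min_def using N_pos p_pos by (subst Min_gr_iff) auto

lemma p_min_le: "i < N \<Longrightarrow> p_min \<le> p i"
  unfolding p_min_def by auto

lemma P_le_1: "i < N \<Longrightarrow> j < N \<Longrightarrow> P $$ (i,j) \<le> 1"
proof -
  assume ij: "i < N" "j < N"
  have "P $$ (i,j) \<le> (\<Sum>k<N. P $$ (i,k))"
    by (rule member_le_sum) (use ij P_nonneg in auto)
  then show ?thesis using P_rowsum ij by simp
qed

section \<open>Submultiplicativity\<close>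

lemma words_Suc_image: "words (Suc n) = (\<lambda>(k,v). k#v) ` ({..<N} \<times> words n)"
proof
  show "words (Suc n) \<subseteq> (\<lambda>(k,v). k#v) ` ({..<N} \<times> words n)"
  proof
    fix w assume "w \<in> words (Suc n)"
    then obtain k v where "w = k#v" "k < N" "v \<in> words n" unfolding words_def by (cases w) auto
    then show "w \<in> (\<lambda>(k,v). k#v) ` ({..<N} \<times> words n)" by auto
  qed
qed (auto simp: words_def)

lemma sum_words_Suc: "(\<Sum>w\<in>words (Suc n). f w) = (\<Sum>k<N. \<Sum>v\<in>words n. f (k#v))"
proof -
  have "(\<Sum>w\<in>words (Suc n). f w) = (\<Sum>(k,v)\<in>{..<N} \<times> words n. f (k#v))"
    unfolding words_Suc_image by (subst sum.reindex) (auto simp: inj_on_def case_prod_unfold)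
  also have "\<dots> = (\<Sum>k<N. \<Sum>v\<in>words n. f (k#v))" by (simp add: sum.cartesian_product)
  finally show ?thesis .
qed

lemma words_add_image: "words (m + n) = (\<lambda>(w1,w2). w1 @ w2) ` (words m \<times> words n)"
proof
  show "words (m + n) \<subseteq> (\<lambda>(w1,w2). w1 @ w2) ` (words m \<times> words n)"
  proof
    fix w assume w: "w \<in> words (m + n)"
    have "w = take m w @ drop m w" by simp
    moreover have "take m w \<in> words m" "drop m w \<in> words n" using w unfolding words_def
      by (auto dest: in_set_takeD in_set_dropD)
    ultimately show "w \<in> (\<lambda>(w1,w2). w1 @ w2) ` (words m \<times> words n)"
      by (auto intro!: image_eqI[of _ _ "(take m w, drop m w)"])
  qed
qed (auto simp: words_def)

lemma sum_words_add: "(\<Sum>w\<in>words (m + n). f w) = (\<Sum>w1\<in>words m. \<Sum>w2\<in>words n. f (w1 @ w2))"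
proof -
  have inj: "inj_on (\<lambda>(w1,w2). w1 @ w2) (words m \<times> words n)"
    by (auto simp: inj_on_def words_def)
  have "(\<Sum>w\<in>words (m + n). f w) = (\<Sum>(w1,w2)\<in>words m \<times> words n. f (w1 @ w2))"
    unfolding words_add_image by (subst sum.reindex[OF inj]) (auto simp: case_prod_unfold)
  also have "\<dots> = (\<Sum>w1\<in>words m. \<Sum>w2\<in>words n. f (w1 @ w2))" by (simp add: sum.cartesian_product)
  finally show ?thesis .
qed

lemma surv_eq_sum_if: "surv n = (\<Sum>w\<in>words n. if avoids w then word_wt p P w else 0)"
  unfolding surv_def by (simp add: sum.inter_filter)

lemma word_wt_append_le:
  assumes "w1 \<in> words m" "w2 \<in> words n" "m \<ge> 1" "n \<ge> 1"
  shows "word_wt p P (w1 @ w2) \<le> word_wt p P w1 * word_wt p P w2 / p_min"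
proof -
  obtain k v where w2: "w2 = k # v" using assms by (cases w2) (auto simp: words_def)
  have w1ne: "w1 \<noteq> []" using assms by (auto simp: words_def)
  have kN: "k < N" "set v \<subseteq> {..<N}" using assms w2 by (auto simp: words_def)
  have w1N: "set w1 \<subseteq> {..<N}" using assms by (auto simp: words_def)
  have lN: "last w1 < N" using w1N w1ne last_in_set by blast
  have pwv: "path_wt P k v \<ge> 0" using path_wt_nonneg kN by auto
  have "word_wt p P (w1 @ w2) = word_wt p P w1 * (P $$ (last w1, k) * path_wt P k v)"
    using word_wt_append[OF w1ne] w2 by simp
  also have "\<dots> \<le> word_wt p P w1 * path_wt P k v"
    using P_le_1[OF lN kN(1)] pwv word_wt_nonneg[OF w1N]
    by (intro mult_left_mono) (auto simp: mult_left_le_one_le P_nonneg lN kN)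
  also have "path_wt P k v \<le> word_wt p P w2 / p_min"
  proof -
    have "p_min * path_wt P k v \<le> p k * path_wt P k v" using p_min_le[OF kN(1)] pwv by (simp add: mult_right_mono)
    then show ?thesis using w2 p_min_pos by (simp add: word_wt_def pos_le_divide_eq mult.commute)
  qed
  then have "word_wt p P w1 * path_wt P k v \<le> word_wt p P w1 * (word_wt p P w2 / p_min)"
    using word_wt_nonneg[OF w1N] by (metis mult_left_mono times_divide_eq_right)
  finally show ?thesis by simp
qed

lemma surv_submult:
  assumes "m \<ge> 1" "n \<ge> 1"
  shows "surv (m + n) \<le> surv m * surv n / p_min"
proof -
  have "surv (m + n) = (\<Sum>w1\<in>words m. \<Sum>w2\<in>words n. if avoids (w1 @ w2) then word_wt p P (w1 @ w2) else 0)"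
    unfolding surv_eq_sum_if by (rule sum_words_add)
  also have "\<dots> \<le> (\<Sum>w1\<in>words m. \<Sum>w2\<in>words n. (if avoids w1 then word_wt p P w1 else 0) * (if avoids w2 then word_wt p P w2 else 0) / p_min)"
  proof (intro sum_mono)
    fix w1 w2 assume w: "w1 \<in> words m" "w2 \<in> words n"
    show "(if avoids (w1 @ w2) then word_wt p P (w1 @ w2) else 0) \<le> (if avoids w1 then word_wt p P w1 else 0) * (if avoids w2 then word_wt p P w2 else 0) / p_min"
      using avoids_appendD[of w1 w2] word_wt_append_le[OF w assms] word_wt_nonneg p_min_pos w
      by (auto simp: words_def intro!: divide_nonneg_pos mult_nonneg_nonneg)
  qed
  also have "\<dots> = (\<Sum>w1\<in>words m. \<Sum>w2\<in>words n. (if avoids w1 then word_wt p P w1 else 0) * (if avoids w2 then word_wt p P w2 else 0)) / p_min"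
    by (simp add: sum_divide_distrib)
  also have "\<dots> = surv m * surv n / p_min"
    unfolding surv_eq_sum_if sum_product ..
  finally show ?thesis .
qed

section \<open>Harmonic vectors and a lower bound for \<open>surv\<close>\<close>

text \<open>Maximum principle: the set where \<open>x\<close> attains a positive maximum is closed under
  predecessors, so by irreducibility it would contain \<open>j\<close>.\<close>

lemma harmonic_nonpos:
  assumes j: "j < N" "x j = 0"
    and h: "\<And>i. i < N \<Longrightarrow> i \<noteq> j \<Longrightarrow> x i = (\<Sum>k<N. P $$ (i,k) * x k)"
    and i: "i < N"
  shows "x i \<le> 0"
proof -
  let ?M = "Max (x ` {..<N})"
  have fin: "finite (x ` {..<N})" "x ` {..<N} \<noteq> {}" using N_pos by auto
  have M_ge: "\<And>i. i < N \<Longrightarrow> x i \<le> ?M" using fin by auto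
  have "?M \<le> 0"
  proof (rule ccontr)
    assume Mpos: "\<not> ?M \<le> 0"
    let ?Z = "{i. x i < ?M}"
    have allZ: "k \<in> ?Z" if k: "k < N" for k
    proof (rule pred_closed_contains_all[of ?Z j k])
      fix k' i' assume hk: "k' \<in> ?Z" "k' < N" "i' < N" "P $$ (i',k') > 0"
      show "i' \<in> ?Z"
      proof (rule ccontr)
        assume "i' \<notin> ?Z"
        then have xi: "x i' = ?M" using M_ge[OF hk(3)] by simp
        then have "i' \<noteq> j" using j Mpos by auto
        then have "x i' = (\<Sum>k<N. P $$ (i',k) * x k)" using h hk(3) by simp
        also have "\<dots> < (\<Sum>k<N. P $$ (i',k) * ?M)"
        proof (rule sum_strict_mono_ex1)
          show "\<forall>k\<in>{..<N}. P $$ (i',k) * x k \<le> P $$ (i',k) * ?M"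
            using M_ge P_nonneg hk(3) by (auto intro: mult_left_mono)
          show "\<exists>k\<in>{..<N}. P $$ (i',k) * x k < P $$ (i',k) * ?M"
            using hk by (auto intro!: bexI[of _ k'])
        qed simp
        also have "\<dots> = ?M" using P_rowsum[OF hk(3)] by (simp add: sum_distrib_right[symmetric])
        finally show False using xi by simp
      qed
    qed (use j Mpos k in auto)
    obtain i0 where i0: "i0 < N" "x i0 = ?M" using Max_in[OF fin] by auto
    then show False using allZ[OF i0(1)] by simp
  qed
  then show ?thesis using M_ge[OF i] by simp
qed

lemma harmonic_zero:
  assumes j: "j < N" "x j = 0"
    and h: "\<And>i. i < N \<Longrightarrow> i \<noteq> j \<Longrightarrow> x i = (\<Sum>k<N. P $$ (i,k) * x k)"
    and i: "i < N"
  shows "x i = 0"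
proof -
  have "x i \<le> 0" using harmonic_nonpos[OF j h i] .
  moreover have h2: "\<And>i'. i' < N \<Longrightarrow> i' \<noteq> j \<Longrightarrow> - x i' = (\<Sum>k<N. P $$ (i',k) * - x k)"
    using h by (simp add: sum_negf)
  have "- x i \<le> 0" using harmonic_nonpos[of j "\<lambda>i. - x i", OF _ _ h2 i] j by simp
  ultimately show ?thesis by simp
qed

lemma harmonic_const:
  assumes h: "\<And>i. i < N \<Longrightarrow> x i = (\<Sum>k<N. P $$ (i,k) * x k)"
    and i: "i < N" and j: "j < N"
  shows "x i = x j"
proof -
  have h2: "\<And>i'. i' < N \<Longrightarrow> i' \<noteq> j \<Longrightarrow> x i' - x j = (\<Sum>k<N. P $$ (i',k) * (x k - x j))"
  proof -
    fix i' assume i': "i' < N" "i' \<noteq> j"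
    have "(\<Sum>k<N. P $$ (i',k) * (x k - x j)) = (\<Sum>k<N. P $$ (i',k) * x k) - (\<Sum>k<N. P $$ (i',k)) * x j"
      by (simp add: right_diff_distrib sum_subtractf sum_distrib_right)
    then show "x i' - x j = (\<Sum>k<N. P $$ (i',k) * (x k - x j))" using h[OF i'(1)] P_rowsum[OF i'(1)] by simp
  qed
  have "x i - x j = 0" using harmonic_zero[of j "\<lambda>i. x i - x j", OF _ _ h2 i] j by simp
  then show ?thesis by simp
qed

fun no_last_wt :: "nat \<Rightarrow> nat \<Rightarrow> real" where
  "no_last_wt 0 i = 1"
| "no_last_wt (Suc n) i = (\<Sum>k<N. if k = last u then 0 else P $$ (i,k) * no_last_wt n k)"

lemma words_0: "words 0 = {[]}" unfolding words_def by auto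

lemma no_last_wt_eq_sum: "(\<Sum>v\<in>words n. if last u \<in> set v then 0 else path_wt P i v) = no_last_wt n i"
proof (induction n arbitrary: i)
  case 0 then show ?case by (simp add: words_0)
next
  case (Suc n)
  have "(\<Sum>v\<in>words (Suc n). if last u \<in> set v then 0 else path_wt P i v)
      = (\<Sum>k<N. \<Sum>v\<in>words n. if last u \<in> set (k#v) then 0 else path_wt P i (k#v))" by (rule sum_words_Suc)
  also have "\<dots> = (\<Sum>k<N. if k = last u then 0 else P $$ (i,k) * (\<Sum>v\<in>words n. if last u \<in> set v then 0 else path_wt P k v))"
    by (intro sum.cong) (auto simp: sum_distrib_left intro!: sum.cong)
  also have "\<dots> = no_last_wt (Suc n) i" unfolding Suc.IH by simp
  finally show ?case .
qed

lemma no_last_wt_le_surv: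
  assumes i: "i < N"
  shows "p i * no_last_wt n i \<le> surv (Suc n)"
proof -
  have "p i * no_last_wt n i = (\<Sum>v\<in>words n. if last u \<in> set v then 0 else p i * path_wt P i v)"
    unfolding no_last_wt_eq_sum[symmetric] by (auto simp: sum_distrib_left intro!: sum.cong)
  also have "\<dots> \<le> (\<Sum>v\<in>words n. if avoids (i#v) then word_wt p P (i#v) else 0)"
    by (intro sum_mono) (auto simp: word_wt_def avoids_Cons_if_last_notin words_def intro!: mult_nonneg_nonneg p_nonneg i path_wt_nonneg)
  also have "\<dots> \<le> (\<Sum>k<N. \<Sum>v\<in>words n. if avoids (k#v) then word_wt p P (k#v) else 0)"
  proof (rule member_le_sum[of i "{..<N}" "\<lambda>k. \<Sum>v\<in>words n. if avoids (k#v) then word_wt p P (k#v) else 0"])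
    fix k assume "k \<in> {..<N} - {i}"
    then show "0 \<le> (\<Sum>v\<in>words n. if avoids (k#v) then word_wt p P (k#v) else 0)"
      by (intro sum_nonneg) (auto simp: words_def intro!: word_wt_nonneg)
  qed (use i in auto)
  also have "\<dots> = surv (Suc n)" unfolding surv_eq_sum_if by (rule sum_words_Suc[symmetric])
  finally show ?thesis .
qed

lemma eigvec_bound:
  assumes z1: "z1 > 0"
    and x: "\<And>i. i < N \<Longrightarrow> x i = z1 * (\<Sum>k<N. P $$ (i,k) * x k)"
    and x0: "x (last u) = 0"
    and i: "i < N"
  shows "\<bar>x i\<bar> \<le> z1 ^ n * no_last_wt n i * Max ((\<lambda>k. \<bar>x k\<bar>) ` {..<N})"
  using i
proof (induction n arbitrary: i)
  case 0
  then show ?case by simp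
next
  case (Suc n)
  let ?M = "Max ((\<lambda>k. \<bar>x k\<bar>) ` {..<N})"
  have "\<bar>x i\<bar> = z1 * \<bar>\<Sum>k<N. P $$ (i,k) * x k\<bar>" using x[OF Suc.prems] z1 by (simp add: abs_mult)
  also have "(\<Sum>k<N. P $$ (i,k) * x k) = (\<Sum>k<N. if k = last u then 0 else P $$ (i,k) * x k)"
    using x0 by (intro sum.cong) auto
  also have "\<bar>\<dots>\<bar> \<le> (\<Sum>k<N. if k = last u then 0 else P $$ (i,k) * \<bar>x k\<bar>)"
    by (rule order.trans[OF sum_abs]) (auto intro!: sum_mono simp: abs_mult P_nonneg Suc.prems)
  also have "\<dots> \<le> (\<Sum>k<N. if k = last u then 0 else P $$ (i,k) * (z1 ^ n * no_last_wt n k * ?M))"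
    by (intro sum_mono) (auto intro!: mult_left_mono Suc.IH P_nonneg Suc.prems)
  finally have "\<bar>x i\<bar> \<le> z1 * (\<Sum>k<N. if k = last u then 0 else P $$ (i,k) * (z1 ^ n * no_last_wt n k * ?M))"
    using z1 by (simp add: mult_left_mono)
  also have "\<dots> = z1 ^ Suc n * no_last_wt (Suc n) i * ?M"
    by (simp add: sum_distrib_left sum_distrib_right if_distrib algebra_simps cong: if_cong)
  finally show ?case .
qed

lemma surv_lower_if_eigvec:
  assumes z1: "z1 > 0"
    and x: "\<And>i. i < N \<Longrightarrow> x i = z1 * (\<Sum>k<N. P $$ (i,k) * x k)"
    and x0: "x (last u) = 0"
    and nz: "i0 < N" "x i0 \<noteq> 0"
  shows "p_min / z1 ^ n \<le> surv (Suc n)"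
proof -
  let ?M = "Max ((\<lambda>k. \<bar>x k\<bar>) ` {..<N})"
  have fin: "finite ((\<lambda>k. \<bar>x k\<bar>) ` {..<N})" "(\<lambda>k. \<bar>x k\<bar>) ` {..<N} \<noteq> {}" using N_pos by auto
  obtain i where i: "i < N" "\<bar>x i\<bar> = ?M" using Max_in[OF fin] by auto
  have Mge: "?M \<ge> \<bar>x i0\<bar>" using fin nz by (intro Max_ge) auto
  have "\<bar>x i0\<bar> > 0" using nz by simp
  then have Mpos: "?M > 0" using Mge by linarith
  have "?M \<le> z1 ^ n * no_last_wt n i * ?M" using eigvec_bound[OF z1 x x0 i(1), of n] i by simp
  then have "1 \<le> z1 ^ n * no_last_wt n i" using Mpos by simp
  then have g: "1 / z1 ^ n \<le> no_last_wt n i" using z1 by (simp add: divide_le_eq mult.commute)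
  have "p_min / z1 ^ n \<le> p i * (1 / z1 ^ n)" using p_min_le[OF i(1)] z1 by (simp add: divide_right_mono)
  also have "\<dots> \<le> p i * no_last_wt n i" using g p_nonneg[OF i(1)] by (rule mult_left_mono)
  also have "\<dots> \<le> surv (Suc n)" by (rule no_last_wt_le_surv[OF i(1)])
  finally show ?thesis .
qed

section \<open>The Markov measure of the survivor set\<close>

lemma SigmaA_shift: "x \<in> SigmaA N A \<Longrightarrow> (\<lambda>n. x (n + k)) \<in> SigmaA N A"
  unfolding SigmaA_def by auto

lemma ex_succ: "j < N \<Longrightarrow> \<exists>k. k < N \<and> A $$ (j,k) = 1"
proof (rule ccontr)
  assume j: "j < N" and "\<not> (\<exists>k. k < N \<and> A $$ (j,k) = 1)"
  then have "\<forall>k<N. P $$ (j,k) = 0" using P_pos_iff P_nonneg by (meson not_le order_antisym)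
  then show False using P_rowsum[OF j] by simp
qed

definition succ :: "nat \<Rightarrow> nat" where
  "succ j = (SOME k. k < N \<and> A $$ (j,k) = 1)"

lemma succ_edge: "j < N \<Longrightarrow> succ j < N \<and> A $$ (j, succ j) = 1"
  unfolding succ_def using someI_ex[OF ex_succ] by blast

lemma funpow_succ_less: "j < N \<Longrightarrow> (succ ^^ m) j < N"
  by (induction m) (auto simp: succ_edge)

text \<open>Every state has a successor, so a finite path extends to an infinite one.\<close>

lemma allowed_if_edges:
  assumes w: "set w \<subseteq> {..<N}" "w \<noteq> []"
    and edges: "\<And>j. Suc j < length w \<Longrightarrow> A $$ (w ! j, w ! Suc j) = 1"
  shows "allowed N A w"
proof -
  have lw: "last w < N" using w last_in_set by blast
  define x where "x n = (if n < length w then w ! n else (succ ^^ (n + 1 - length w)) (last w))" for n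
  have xN: "x n < N" for n
    using w funpow_succ_less[OF lw] unfolding x_def by (auto intro: subsetD[OF w(1)] nth_mem)
  have "A $$ (x n, x (Suc n)) = 1" for n
  proof (cases "Suc n < length w")
    case True then show ?thesis using edges unfolding x_def by simp
  next
    case False
    have "x (Suc n) = succ (x n)"
    proof (cases "Suc n = length w")
      case True
      then show ?thesis using w(2) True[symmetric] by (simp add: x_def last_conv_nth)
    next
      case False
      with \<open>\<not> Suc n < length w\<close> show ?thesis by (simp add: x_def Suc_diff_le)
    qed
    then show ?thesis using succ_edge[OF xN[of n]] by simp
  qed
  then have "x \<in> SigmaA N A" unfolding SigmaA_def using xN by auto
  moreover have "\<forall>i<length w. x (0 + i) = w ! i" unfolding x_def by simp
  ultimately show ?thesis unfolding allowed_def by blast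
qed

lemma allowed_if_word_wt_nonzero:
  assumes w: "set w \<subseteq> {..<N}" "w \<noteq> []" and nz: "word_wt p P w \<noteq> 0"
  shows "allowed N A w"
proof (rule allowed_if_edges[OF w])
  fix j assume j: "Suc j < length w"
  have wj: "w ! j < N" "w ! Suc j < N" using w j nth_mem by (metis Suc_lessD lessThan_iff subsetD)+
  have "(\<Prod>j<length w - 1. P $$ (w ! j, w ! (j+1))) \<noteq> 0"
    using nz w unfolding markov_cyl_eq_word_wt[symmetric] markov_cyl_def by auto
  then have "P $$ (w ! j, w ! Suc j) \<noteq> 0" using j by simp
  then have "P $$ (w ! j, w ! Suc j) > 0" using P_nonneg[OF wj] by simp
  then show "A $$ (w ! j, w ! Suc j) = 1" using P_pos_iff[OF wj] by simp
qed

lemma allowed_edges: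
  assumes "allowed N A w" and "Suc j < length w"
  shows "A $$ (w ! j, w ! Suc j) = 1"
proof -
  obtain x k where x: "x \<in> SigmaA N A" "\<forall>i<length w. x (k + i) = w ! i"
    using assms(1) unfolding allowed_def by blast
  then have "A $$ (x (k + j), x (Suc (k + j))) = 1" unfolding SigmaA_def by blast
  then show ?thesis using x(2) assms(2) by (metis Suc_lessD add_Suc_right)
qed

lemma allowed_cyl_nonempty: "allowed N A w \<Longrightarrow> \<exists>y. y \<in> cyl N A w"
proof -
  assume "allowed N A w"
  then obtain x k where x: "x \<in> SigmaA N A" "\<forall>i<length w. x (k + i) = w ! i"
    unfolding allowed_def by blast
  then have "(\<lambda>n. x (n + k)) \<in> cyl N A w"
    unfolding cyl_def using SigmaA_shift[OF x(1), of k] by (simp add: add.commute)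
  then show ?thesis by blast
qed

lemma shift_in_cyl_u_iff:
  assumes y: "y \<in> cyl N A w" and i: "i + r \<le> length w"
  shows "(shift ^^ i) y \<in> cyl N A u \<longleftrightarrow> occurs_at w i"
proof -
  have "y (k + i) = take r (drop i w) ! k" if "k < r" for k
    using y i that unfolding cyl_def by (simp add: add.commute)
  then have "(\<forall>k<r. y (k + i) = u ! k) \<longleftrightarrow> take r (drop i w) = u"
    using i by (auto simp: list_eq_iff_nth_eq)
  moreover have "(\<lambda>n. y (n + i)) \<in> SigmaA N A" using y SigmaA_shift unfolding cyl_def by blast
  ultimately show ?thesis using i unfolding cyl_def occurs_at_def funpow_shift by auto
qed

lemma cyl_subset_survivors_iff:
  assumes w: "w \<in> words (m + r)" and al: "allowed N A w"
  shows "cyl N A w \<subseteq> survivors N A (cyl N A u) m \<longleftrightarrow> avoids w"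
proof
  assume sub: "cyl N A w \<subseteq> survivors N A (cyl N A u) m"
  obtain y where y: "y \<in> cyl N A w" using allowed_cyl_nonempty[OF al] by blast
  have "\<not> occurs_at w i" for i
  proof
    assume occ: "occurs_at w i"
    then have "i \<le> m" using w unfolding occurs_at_def words_def by simp
    moreover have "(shift ^^ i) y \<in> cyl N A u"
      using shift_in_cyl_u_iff[OF y] occ unfolding occurs_at_def by blast
    ultimately show False using sub y unfolding survivors_def by blast
  qed
  then show "avoids w" unfolding avoids_def by blast
next
  assume "avoids w"
  then have "(shift ^^ i) y \<notin> cyl N A u" if "y \<in> cyl N A w" "i \<le> m" for y i
    using shift_in_cyl_u_iff[OF that(1)] that(2) w unfolding avoids_def words_def by simp
  then show "cyl N A w \<subseteq> survivors N A (cyl N A u) m"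
    unfolding survivors_def cyl_def by blast
qed

lemma measure_survivors_eq_surv:
  "markov_measure_lvl N A p P (m + r) (survivors N A (cyl N A u) m) = surv (m + r)"
proof -
  let ?C = "\<lambda>w. allowed N A w \<and> cyl N A w \<subseteq> survivors N A (cyl N A u) m"
  have "markov_measure_lvl N A p P (m + r) (survivors N A (cyl N A u) m)
      = (\<Sum>w\<in>words (m + r). if ?C w then word_wt p P w else 0)"
    unfolding markov_measure_lvl_def markov_cyl_eq_word_wt sum.inter_filter[OF finite_words, symmetric]
    by (rule sum.cong) (auto simp: words_def)
  also have "\<dots> = (\<Sum>w\<in>words (m + r). if avoids w then word_wt p P w else 0)"
  proof (rule sum.cong)
    fix w assume w: "w \<in> words (m + r)"
    then have "w \<noteq> []" "set w \<subseteq> {..<N}" using r_ge2 unfolding words_def by auto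
    then have "word_wt p P w \<noteq> 0 \<Longrightarrow> allowed N A w" using allowed_if_word_wt_nonzero by blast
    then show "(if ?C w then word_wt p P w else 0) = (if avoids w then word_wt p P w else 0)"
      using cyl_subset_survivors_iff[OF w] by (cases "word_wt p P w = 0") auto
  qed simp
  finally show ?thesis unfolding surv_eq_sum_if .
qed

section \<open>Generating functions\<close>

definition IzP :: "real \<Rightarrow> real mat" where "IzP z = 1\<^sub>m N - z \<cdot>\<^sub>m P"
definition det_IzP :: "real \<Rightarrow> real" where "det_IzP z = det (IzP z)"
definition adj_IzP :: "real \<Rightarrow> real mat" where "adj_IzP z = adj_mat (IzP z)"

lemma IzP_carrier: "IzP z \<in> carrier_mat N N"
  unfolding IzP_def using P_carrier by auto

lemma IzP_index: "i < N \<Longrightarrow> j < N \<Longrightarrow> IzP z $$ (i,j) = (if i = j then 1 else 0) - z * P $$ (i,j)"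
  unfolding IzP_def using P_carrier by auto

lemma adj_IzP_carrier: "adj_IzP z \<in> carrier_mat N N"
  unfolding adj_IzP_def using adj_mat(1)[OF IzP_carrier] .

lemma IzP_adj_sum: "i < N \<Longrightarrow> k < N \<Longrightarrow> (\<Sum>j<N. IzP z $$ (i,j) * adj_IzP z $$ (j,k)) = (if i = k then det_IzP z else 0)"
proof -
  assume ik: "i < N" "k < N"
  have "(IzP z * adj_IzP z) $$ (i,k) = (\<Sum>j<N. IzP z $$ (i,j) * adj_IzP z $$ (j,k))"
    by (rule index_mult_mat_sum[OF IzP_carrier adj_IzP_carrier ik])
  moreover have "IzP z * adj_IzP z = det_IzP z \<cdot>\<^sub>m 1\<^sub>m N" unfolding adj_IzP_def det_IzP_def using adj_mat(2)[OF IzP_carrier] .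
  ultimately show ?thesis using ik by (cases "i = k") auto
qed

lemma f_u_eq: "f_u N P u z = tau_tilde P u z * det_IzP z + z^(r-1) * delta_u * adj_IzP z $$ (last u, hd u)"
  unfolding f_u_def det_IzP_def adj_IzP_def IzP_def by simp

lemma p_IzP: "j < N \<Longrightarrow> (\<Sum>i<N. p i * IzP z $$ (i,j)) = (1 - z) * p j"
proof -
  assume j: "j < N"
  have "(\<Sum>i<N. p i * IzP z $$ (i,j)) = (\<Sum>i<N. p i * (if i = j then 1 else 0) - z * (p i * P $$ (i,j)))"
    by (rule sum.cong) (auto simp: IzP_index j right_diff_distrib)
  also have "\<dots> = (\<Sum>i<N. p i * (if i = j then 1 else 0)) - z * (\<Sum>i<N. p i * P $$ (i,j))"
    by (simp only: sum_subtractf sum_distrib_left)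
  also have "\<dots> = p j - z * p j" using j p_stat[OF j] by (simp add: if_distrib cong: if_cong)
  finally show ?thesis by (simp add: left_diff_distrib)
qed

lemma p_adj_IzP: "k < N \<Longrightarrow> (1 - z) * (\<Sum>i<N. p i * adj_IzP z $$ (i,k)) = det_IzP z * p k"
proof -
  assume k: "k < N"
  have "(1 - z) * (\<Sum>i<N. p i * adj_IzP z $$ (i,k)) = (\<Sum>i<N. ((1 - z) * p i) * adj_IzP z $$ (i,k))"
    by (simp only: sum_distrib_left mult.assoc)
  also have "\<dots> = (\<Sum>i<N. (\<Sum>j<N. p j * IzP z $$ (j,i)) * adj_IzP z $$ (i,k))"
    by (rule sum.cong) (simp_all add: p_IzP)
  also have "\<dots> = (\<Sum>i<N. \<Sum>j<N. p j * IzP z $$ (j,i) * adj_IzP z $$ (i,k))"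
    by (simp only: sum_distrib_right)
  also have "\<dots> = (\<Sum>j<N. \<Sum>i<N. p j * IzP z $$ (j,i) * adj_IzP z $$ (i,k))"
    by (rule sum.swap)
  also have "\<dots> = (\<Sum>j<N. p j * (\<Sum>i<N. IzP z $$ (j,i) * adj_IzP z $$ (i,k)))"
    by (simp only: sum_distrib_left mult.assoc)
  also have "\<dots> = (\<Sum>j<N. p j * (if j = k then det_IzP z else 0))"
    by (rule sum.cong) (simp_all add: IzP_adj_sum k)
  also have "\<dots> = det_IzP z * p k" using k by (simp add: if_distrib cong: if_cong)
  finally show ?thesis .
qed

definition conv_at :: "real \<Rightarrow> bool" where "conv_at z \<longleftrightarrow> 0 \<le> z \<and> summable (\<lambda>n. surv (Suc n) * z ^ Suc n)"
definition gf_last :: "nat \<Rightarrow> real \<Rightarrow> real" where "gf_last j z = (\<Sum>n. surv_last (Suc n) j * z ^ Suc n)"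
definition gf_hit :: "real \<Rightarrow> real" where "gf_hit z = (\<Sum>n. first_hit (Suc n) * z ^ Suc n)"
definition gf_surv :: "real \<Rightarrow> real" where "gf_surv z = (\<Sum>n. surv (Suc n) * z ^ Suc n)"

lemma conv_at_mono: assumes c: "conv_at z1" and z: "0 \<le> z" "z \<le> z1" shows "conv_at z"
  unfolding conv_at_def
proof (intro conjI)
  show "summable (\<lambda>n. surv (Suc n) * z ^ Suc n)"
  proof (rule summable_comparison_test[of _ "\<lambda>n. surv (Suc n) * z1 ^ Suc n"])
    show "\<exists>N'. \<forall>n\<ge>N'. norm (surv (Suc n) * z ^ Suc n) \<le> surv (Suc n) * z1 ^ Suc n"
    proof (intro exI allI impI)
      fix n :: nat
      have "surv (Suc n) * z ^ Suc n \<le> surv (Suc n) * z1 ^ Suc n"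
        by (rule mult_left_mono[OF power_mono]) (use z surv_nonneg in auto)
      then show "norm (surv (Suc n) * z ^ Suc n) \<le> surv (Suc n) * z1 ^ Suc n"
        using z surv_nonneg[of "Suc n"] by simp
    qed
    show "summable (\<lambda>n. surv (Suc n) * z1 ^ Suc n)" using c unfolding conv_at_def by auto
  qed
qed (use z in auto)

lemma conv_at_less_1: assumes z: "0 \<le> z" "z < 1" shows "conv_at z"
  unfolding conv_at_def
proof (intro conjI)
  show "summable (\<lambda>n. surv (Suc n) * z ^ Suc n)"
  proof (rule summable_comparison_test[of _ "\<lambda>n. z ^ Suc n"])
    show "\<exists>N'. \<forall>n\<ge>N'. norm (surv (Suc n) * z ^ Suc n) \<le> z ^ Suc n"
      using z surv_le_1 surv_nonneg by (auto simp: abs_mult intro!: mult_left_le_one_le)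
    show "summable (\<lambda>n. z ^ Suc n)" using z by (simp add: summable_geometric)
  qed
qed (use z in auto)

lemma summable_surv_last: assumes c: "conv_at z" and j: "j < N" shows "summable (\<lambda>n. surv_last (Suc n) j * z ^ Suc n)"
proof (rule summable_comparison_test[of _ "\<lambda>n. surv (Suc n) * z ^ Suc n"])
  have z: "z \<ge> 0" using c unfolding conv_at_def by auto
  show "\<exists>N'. \<forall>n\<ge>N'. norm (surv_last (Suc n) j * z ^ Suc n) \<le> surv (Suc n) * z ^ Suc n"
  proof (intro exI allI impI)
    fix n :: nat
    have "surv_last (Suc n) j * z ^ Suc n \<le> surv (Suc n) * z ^ Suc n"
      by (rule mult_right_mono[OF surv_last_le_surv]) (use z j in auto)
    then show "norm (surv_last (Suc n) j * z ^ Suc n) \<le> surv (Suc n) * z ^ Suc n"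
      using z surv_last_nonneg[of "Suc n" j] by simp
  qed
  show "summable (\<lambda>n. surv (Suc n) * z ^ Suc n)" using c unfolding conv_at_def by auto
qed

lemma summable_first_hit: "conv_at z \<Longrightarrow> summable (\<lambda>n. first_hit (Suc n) * z ^ Suc n)"
proof -
  assume c: "conv_at z"
  then have z: "z \<ge> 0" and s: "summable (\<lambda>n. surv (Suc n) * z ^ Suc n)" unfolding conv_at_def by auto
  have "summable (\<lambda>n. first_hit (Suc (Suc n)) * z ^ Suc (Suc n))"
  proof (rule summable_comparison_test[of _ "\<lambda>n. z * (surv (Suc n) * z ^ Suc n)"])
    show "\<exists>N'. \<forall>n\<ge>N'. norm (first_hit (Suc (Suc n)) * z ^ Suc (Suc n)) \<le> z * (surv (Suc n) * z ^ Suc n)"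
    proof (intro exI allI impI)
      fix n :: nat
      have "first_hit (Suc (Suc n)) * z ^ Suc (Suc n) \<le> surv (Suc n) * z ^ Suc (Suc n)"
        by (rule mult_right_mono[OF first_hit_le_surv]) (use z in auto)
      moreover have "first_hit (Suc (Suc n)) * z ^ Suc (Suc n) \<ge> 0" using z first_hit_nonneg by simp
      ultimately show "norm (first_hit (Suc (Suc n)) * z ^ Suc (Suc n)) \<le> z * (surv (Suc n) * z ^ Suc n)"
        by (simp add: algebra_simps)
    qed
    show "summable (\<lambda>n. z * (surv (Suc n) * z ^ Suc n))" using s by (rule summable_mult)
  qed
  then show ?thesis by (subst summable_Suc_iff[symmetric])
qed

lemma gf_last_tail:
  assumes "conv_at z" "j < N"
  shows "(\<Sum>n. surv_last (Suc (Suc n)) j * z ^ Suc (Suc n)) = gf_last j z - p j * z"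
  using series_Suc_Suc(2)[OF summable_surv_last[OF assms]] surv_last_1[OF assms(2)]
  unfolding gf_last_def by simp

lemma gf_hit_tail:
  assumes "conv_at z"
  shows "(\<Sum>n. first_hit (Suc (Suc n)) * z ^ Suc (Suc n)) = gf_hit z"
  using series_Suc_Suc(2)[OF summable_first_hit[OF assms]] first_hit_short[of 1] r_ge2
  unfolding gf_hit_def by simp

lemma gf_last_rec:
  assumes c: "conv_at z" and j: "j < N"
  shows "z * (\<Sum>i<N. gf_last i z * P $$ (i,j))
       = gf_last j z - p j * z + (if j = last u then gf_hit z else 0)"
proof -
  have sa: "summable (\<lambda>n. surv_last (Suc n) i * z ^ Suc n)" if "i < N" for i
    using summable_surv_last[OF c that] .
  have st: "summable (\<lambda>n. first_hit (Suc (Suc n)) * z ^ Suc (Suc n))"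
    using series_Suc_Suc(1)[OF summable_first_hit[OF c]] .
  have "gf_last i z * (z * P $$ (i,j)) = (\<Sum>n. surv_last (Suc n) i * z ^ Suc n * (z * P $$ (i,j)))"
    if "i < N" for i
    unfolding gf_last_def by (rule suminf_mult2[OF sa[OF that]])
  then have "z * (\<Sum>i<N. gf_last i z * P $$ (i,j))
      = (\<Sum>i<N. \<Sum>n. surv_last (Suc n) i * z ^ Suc n * (z * P $$ (i,j)))"
    unfolding sum_distrib_left by (intro sum.cong refl) (simp add: ac_simps)
  also have "\<dots> = (\<Sum>n. \<Sum>i<N. surv_last (Suc n) i * z ^ Suc n * (z * P $$ (i,j)))"
    by (rule suminf_sum[symmetric]) (rule summable_mult2[OF sa], simp)
  also have "\<dots> = (\<Sum>n. (\<Sum>i<N. surv_last (Suc n) i * P $$ (i,j)) * z ^ Suc (Suc n))"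
    by (intro arg_cong[where f = suminf] ext) (simp add: sum_distrib_left sum_distrib_right algebra_simps)
  also have "\<dots> = (\<Sum>n. surv_last (Suc (Suc n)) j * z ^ Suc (Suc n)
                      + (if j = last u then first_hit (Suc (Suc n)) * z ^ Suc (Suc n) else 0))"
    using surv_last_rec[of "Suc _" j] j by (cases "j = last u") (simp_all add: algebra_simps)
  also have "\<dots> = (\<Sum>n. surv_last (Suc (Suc n)) j * z ^ Suc (Suc n))
                 + (if j = last u then (\<Sum>n. first_hit (Suc (Suc n)) * z ^ Suc (Suc n)) else 0)"
    using series_Suc_Suc(1)[OF sa[OF j]] st by (cases "j = last u") (simp_all add: suminf_add)
  finally show ?thesis using gf_last_tail[OF c j] gf_hit_tail[OF c] by simp
qed

lemma gf_last_IzP: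
  assumes c: "conv_at z" and j: "j < N"
  shows "(\<Sum>i<N. gf_last i z * IzP z $$ (i,j)) = p j * z - (if j = last u then gf_hit z else 0)"
proof -
  have "(\<Sum>i<N. gf_last i z * IzP z $$ (i,j))
      = (\<Sum>i<N. gf_last i z * (if i = j then 1 else 0)) - z * (\<Sum>i<N. gf_last i z * P $$ (i,j))"
    using j by (simp add: IzP_index right_diff_distrib sum_subtractf sum_distrib_left algebra_simps)
  also have "(\<Sum>i<N. gf_last i z * (if i = j then 1 else 0)) = gf_last j z"
    using j by (simp add: if_distrib cong: if_cong)
  finally show ?thesis using gf_last_rec[OF c j] by simp
qed

lemma gf_surv_eq:
  assumes c: "conv_at z"
  shows "(1 - z) * gf_surv z = z - gf_hit z"
proof -
  have s: "summable (\<lambda>n. surv (Suc n) * z ^ Suc n)" using c unfolding conv_at_def by auto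
  have st: "summable (\<lambda>n. first_hit (Suc (Suc n)) * z ^ Suc (Suc n))"
    using series_Suc_Suc(1)[OF summable_first_hit[OF c]] .
  have "gf_surv z - z = (\<Sum>n. surv (Suc (Suc n)) * z ^ Suc (Suc n))"
    using series_Suc_Suc(2)[OF s] surv_1 unfolding gf_surv_def by simp
  also have "\<dots> = (\<Sum>n. z * (surv (Suc n) * z ^ Suc n) - first_hit (Suc (Suc n)) * z ^ Suc (Suc n))"
    by (simp add: surv_Suc algebra_simps)
  also have "\<dots> = z * gf_surv z - gf_hit z"
    using suminf_diff[OF summable_mult[OF s] st] suminf_mult[OF s] gf_hit_tail[OF c]
    unfolding gf_surv_def by simp
  finally show ?thesis by (simp add: algebra_simps)
qed

lemma gf_hit_shift:
  assumes c: "conv_at z" and k: "k \<in> {1..r}"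
  shows "summable (\<lambda>n. first_hit (Suc n + k) * z ^ (Suc n + k))"
    and "(\<Sum>n. first_hit (Suc n + k) * z ^ (Suc n + k)) = gf_hit z - (if k = r then first_hit r * z ^ r else 0)"
proof -
  let ?F = "\<lambda>n. first_hit (Suc n) * z ^ Suc n"
  have st: "summable ?F" using summable_first_hit[OF c] .
  show "summable (\<lambda>n. first_hit (Suc n + k) * z ^ (Suc n + k))"
    using summable_ignore_initial_segment[OF st, of k] by simp
  have "?F i = (if Suc i = r then first_hit r * z ^ r else 0)" if "i < k" for i
    using first_hit_short[of "Suc i"] that k by (auto simp del: power_Suc)
  then have "(\<Sum>i<k. ?F i) = (\<Sum>i<k. if i = r - 1 then first_hit r * z ^ r else 0)"
    using r_ge2 by (intro sum.cong) auto
  also have "\<dots> = (if k = r then first_hit r * z ^ r else 0)"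
    using k r_ge2 by auto
  finally show "(\<Sum>n. first_hit (Suc n + k) * z ^ (Suc n + k)) = gf_hit z - (if k = r then first_hit r * z ^ r else 0)"
    using suminf_split_initial_segment[OF st, of k] unfolding gf_hit_def by (simp add: add.commute)
qed

text \<open>The second renewal equation with both sides multiplied by \<open>z ^ (n + r)\<close>, distributed
  over the overlaps so that each term is a shifted term of \<open>gf_hit\<close>.\<close>

lemma surv_last_hd_rec_power:
  assumes n: "n \<ge> 1"
  shows "(surv_last (Suc n) (hd u) + (if hd u = last u then first_hit (Suc n) else 0)) * delta_u * z ^ (n + r)
       = (\<Sum>k\<in>{1..r}. (if autocorr_c u (r - k) then autocorr_delta P u (r - k) * z ^ (r - k) else 0)
                       * (first_hit (n + k) * z ^ (n + k)))"
proof -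
  have "z ^ (n + r) = z ^ (r - k) * z ^ (n + k)" if "k \<in> {1..r}" for k
    using that by (simp add: power_add[symmetric] add.commute)
  then show ?thesis
    unfolding surv_last_hd_rec[OF n] sum_distrib_right by (intro sum.cong refl) auto
qed

lemma gf_last_hd_eq:
  assumes c: "conv_at z"
  shows "delta_u * z ^ (r - 1) * (gf_last (hd u) z - p (hd u) * z + (if hd u = last u then gf_hit z else 0))
       = tau P u z * gf_hit z - first_hit r * z ^ r"
proof -
  let ?c = "\<lambda>k. if autocorr_c u (r - k) then autocorr_delta P u (r - k) * z ^ (r - k) else 0"
  define b where "b n = surv_last n (hd u) + (if hd u = last u then first_hit n else 0)" for n
  have sa: "summable (\<lambda>n. surv_last (Suc n) (hd u) * z ^ Suc n)"
    using summable_surv_last[OF c hd_u_less] .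
  have st: "summable (\<lambda>n. first_hit (Suc n) * z ^ Suc n)"
    using summable_first_hit[OF c] .
  have sb: "summable (\<lambda>n. b (Suc n) * z ^ Suc n)"
  proof (cases "hd u = last u")
    case True then show ?thesis using summable_add[OF sa st] by (simp add: b_def algebra_simps)
  next
    case False then show ?thesis using sa by (simp add: b_def)
  qed
  have tail: "(\<Sum>n. b (Suc (Suc n)) * z ^ Suc (Suc n))
      = gf_last (hd u) z - p (hd u) * z + (if hd u = last u then gf_hit z else 0)"
    using gf_last_tail[OF c hd_u_less] gf_hit_tail[OF c] series_Suc_Suc(1)[OF sa] series_Suc_Suc(1)[OF st]
    by (cases "hd u = last u") (simp_all add: b_def algebra_simps suminf_add[symmetric])
  have "b (Suc (Suc n)) * delta_u * z ^ (Suc n + r)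
      = delta_u * z ^ (r - 1) * (b (Suc (Suc n)) * z ^ Suc (Suc n))" for n
  proof -
    have "Suc n + r = (r - 1) + Suc (Suc n)" using r_ge2 by simp
    then show ?thesis by (simp only: power_add) (simp add: algebra_simps)
  qed
  then have "(\<Sum>n. b (Suc (Suc n)) * delta_u * z ^ (Suc n + r))
      = delta_u * z ^ (r - 1) * (\<Sum>n. b (Suc (Suc n)) * z ^ Suc (Suc n))"
    by (simp only:) (rule suminf_mult[OF series_Suc_Suc(1)[OF sb]])
  then have "delta_u * z ^ (r - 1) * (gf_last (hd u) z - p (hd u) * z + (if hd u = last u then gf_hit z else 0))
      = (\<Sum>n. b (Suc (Suc n)) * delta_u * z ^ (Suc n + r))"
    by (simp only: tail)
  also have "\<dots> = (\<Sum>n. \<Sum>k\<in>{1..r}. ?c k * (first_hit (Suc n + k) * z ^ (Suc n + k)))"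
  proof (intro arg_cong[where f = suminf] ext)
    fix n
    show "b (Suc (Suc n)) * delta_u * z ^ (Suc n + r)
        = (\<Sum>k\<in>{1..r}. ?c k * (first_hit (Suc n + k) * z ^ (Suc n + k)))"
      unfolding b_def by (rule surv_last_hd_rec_power) simp
  qed
  also have "\<dots> = (\<Sum>k\<in>{1..r}. \<Sum>n. ?c k * (first_hit (Suc n + k) * z ^ (Suc n + k)))"
    by (rule suminf_sum) (use gf_hit_shift(1)[OF c] in \<open>simp add: summable_mult\<close>)
  also have "\<dots> = (\<Sum>k\<in>{1..r}. ?c k * (\<Sum>n. first_hit (Suc n + k) * z ^ (Suc n + k)))"
    by (intro sum.cong refl) (use gf_hit_shift(1)[OF c] in \<open>simp add: suminf_mult\<close>)
  also have "\<dots> = (\<Sum>k\<in>{1..r}. ?c k * gf_hit z - (if k = r then first_hit r * z ^ r else 0))"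
  proof (intro sum.cong refl)
    fix k assume k: "k \<in> {1..r}"
    show "?c k * (\<Sum>n. first_hit (Suc n + k) * z ^ (Suc n + k))
        = ?c k * gf_hit z - (if k = r then first_hit r * z ^ r else 0)"
      unfolding gf_hit_shift(2)[OF c k]
      by (cases "k = r") (simp_all add: right_diff_distrib autocorr_c_0 autocorr_delta_0)
  qed
  also have "\<dots> = tau P u z * gf_hit z - first_hit r * z ^ r"
    using r_ge2 by (simp add: tau_reindex sum_subtractf sum_distrib_right)
  finally show ?thesis .
qed

lemma gf_last_hd:
  assumes c: "conv_at z"
  shows "delta_u * z ^ (r - 1) * gf_last (hd u) z = tau_tilde P u z * gf_hit z"
proof -
  have "delta_u * z ^ (r - 1) * gf_last (hd u) z
      = tau P u z * gf_hit z - delta_u * z ^ (r - 1) * (if hd u = last u then gf_hit z else 0)"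
    using gf_last_hd_eq[OF c] first_hit_r power_r[of z] by (simp add: algebra_simps)
  then show ?thesis
    unfolding tau_tilde_def using autocorr_c_last by (auto simp: algebra_simps)
qed

text \<open>Multiply the generating-function identities by the adjugate of \<open>I - zP\<close>.\<close>

lemma gf_hit_mult_f_u:
  assumes c: "conv_at z"
  shows "gf_hit z * f_u N P u z = delta_u * z ^ r * (\<Sum>i<N. p i * adj_IzP z $$ (i, hd u))"
proof -
  let ?k = "hd u"
  have "gf_last ?k z * det_IzP z = (\<Sum>j<N. (\<Sum>i<N. gf_last i z * IzP z $$ (i,j)) * adj_IzP z $$ (j,?k))"
  proof -
    have "(\<Sum>j<N. (\<Sum>i<N. gf_last i z * IzP z $$ (i,j)) * adj_IzP z $$ (j,?k))
        = (\<Sum>i<N. gf_last i z * (\<Sum>j<N. IzP z $$ (i,j) * adj_IzP z $$ (j,?k)))"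
      by (simp only: sum_distrib_right sum_distrib_left mult.assoc) (rule sum.swap)
    also have "\<dots> = gf_last ?k z * det_IzP z"
      using hd_u_less by (simp add: IzP_adj_sum if_distrib cong: if_cong)
    finally show ?thesis by simp
  qed
  also have "\<dots> = (\<Sum>j<N. z * (p j * adj_IzP z $$ (j,?k)) - (if j = last u then gf_hit z * adj_IzP z $$ (j,?k) else 0))"
    by (intro sum.cong refl) (auto simp: gf_last_IzP[OF c] algebra_simps)
  also have "\<dots> = z * (\<Sum>j<N. p j * adj_IzP z $$ (j,?k)) - gf_hit z * adj_IzP z $$ (last u, ?k)"
    using last_u_less by (simp add: sum_subtractf sum_distrib_left)
  finally have adj: "gf_last ?k z * det_IzP z = \<dots>" .
  have "gf_hit z * f_u N P u z
      = (tau_tilde P u z * gf_hit z) * det_IzP z + z ^ (r - 1) * delta_u * gf_hit z * adj_IzP z $$ (last u, ?k)"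
    unfolding f_u_eq by (simp add: algebra_simps)
  also have "\<dots> = delta_u * z ^ (r - 1) * (gf_last ?k z * det_IzP z)
      + z ^ (r - 1) * delta_u * gf_hit z * adj_IzP z $$ (last u, ?k)"
    unfolding gf_last_hd[OF c, symmetric] by (simp add: algebra_simps)
  also have "\<dots> = delta_u * z ^ r * (\<Sum>i<N. p i * adj_IzP z $$ (i, ?k))"
    unfolding adj power_r[of z] by (simp add: algebra_simps)
  finally show ?thesis .
qed

lemma gf_hit_mult_f_u_det:
  assumes c: "conv_at z"
  shows "(1 - z) * gf_hit z * f_u N P u z = delta_u * z ^ r * det_IzP z * p (hd u)"
proof -
  have "(1 - z) * gf_hit z * f_u N P u z = delta_u * z ^ r * ((1 - z) * (\<Sum>i<N. p i * adj_IzP z $$ (i, hd u)))"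
    using gf_hit_mult_f_u[OF c] by (simp add: algebra_simps)
  then show ?thesis using p_adj_IzP[OF hd_u_less] by simp
qed

lemma IzP_continuous: "i < N \<Longrightarrow> j < N \<Longrightarrow> continuous_on UNIV (\<lambda>z. IzP z $$ (i,j))"
  by (simp add: IzP_index continuous_intros)

lemma isCont_det_IzP: "isCont det_IzP z"
  using continuous_on_det[OF IzP_carrier IzP_continuous]
  unfolding det_IzP_def by (simp add: continuous_on_eq_continuous_at)

lemma adj_IzP_continuous: "i < N \<Longrightarrow> j < N \<Longrightarrow> continuous_on UNIV (\<lambda>z. adj_IzP z $$ (i,j))"
  unfolding adj_IzP_def by (rule continuous_on_adj_mat_index[OF IzP_carrier IzP_continuous])

lemma isCont_f_u: "isCont (f_u N P u) z"
proof -
  have "continuous_on UNIV (\<lambda>z. tau_tilde P u z * det (IzP z) + z^(r-1) * delta_u * adj_IzP z $$ (last u, hd u))"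
    unfolding tau_tilde_def tau_def
    by (intro continuous_intros continuous_on_det[OF IzP_carrier IzP_continuous]
        adj_IzP_continuous last_u_less hd_u_less)
  then show ?thesis
    unfolding f_u_eq[abs_def] det_IzP_def by (simp add: continuous_on_eq_continuous_at)
qed

lemma isCont_p_adj_IzP: "isCont (\<lambda>z. \<Sum>i<N. p i * adj_IzP z $$ (i, hd u)) z"
proof -
  have "continuous_on UNIV (\<lambda>z. \<Sum>i<N. p i * adj_IzP z $$ (i, hd u))"
    by (intro continuous_intros adj_IzP_continuous hd_u_less) auto
  then show ?thesis by (simp add: continuous_on_eq_continuous_at)
qed

lemma adj_IzP_index: "i < N \<Longrightarrow> j < N \<Longrightarrow> adj_IzP z $$ (i,j) = (-1)^(j+i) * det (mat_delete (IzP z) j i)"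
  using IzP_carrier[of z] by (simp add: adj_IzP_def adj_mat_def cofactor_def)

lemma IzP_mult_sum: "i < N \<Longrightarrow> (\<Sum>j<N. IzP z $$ (i,j) * x j) = x i - z * (\<Sum>j<N. P $$ (i,j) * x j)"
  using sum_if_eq_mult[of i N x]
  by (simp add: IzP_index left_diff_distrib sum_subtractf sum_distrib_left mult.assoc)

lemma delta_u_pos: "delta_u > 0"
proof -
  have "P $$ (u ! (j-1), u ! j) > 0" if j: "j \<in> {1..<r}" for j
  proof -
    have "u ! (j-1) \<in> set u" "u ! j \<in> set u" using j by (auto intro!: nth_mem)
    then have "u ! (j-1) < N" "u ! j < N" using u_states by auto
    moreover obtain i where "j = Suc i" using j by (cases j) auto
    then have "A $$ (u ! (j-1), u ! j) = 1" using allowed_edges[OF u_allowed, of i] j by simp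
    ultimately show ?thesis using P_pos_iff j by simp
  qed
  then show ?thesis unfolding word_delta_def by (intro prod_pos) auto
qed

lemma det_IzP_1: "det_IzP 1 = 0"
proof -
  let ?v = "vec N (\<lambda>_. 1::real)"
  have "?v \<noteq> 0\<^sub>v N" using N_pos by (metis index_vec index_zero_vec(1) zero_neq_one)
  moreover have "IzP 1 *\<^sub>v ?v = 0\<^sub>v N"
  proof (rule eq_vecI)
    fix i assume "i < dim_vec (0\<^sub>v N :: real vec)"
    then have i: "i < N" by simp
    have "(IzP 1 *\<^sub>v ?v) $ i = (\<Sum>k<N. IzP 1 $$ (i,k) * ?v $ k)"
      by (rule index_mult_mat_vec_sum[OF IzP_carrier _ i]) simp
    also have "\<dots> = (\<Sum>k<N. (if i = k then 1 else 0) - P $$ (i,k))" by (rule sum.cong) (simp_all add: IzP_index i)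
    also have "\<dots> = 0" using i P_rowsum[OF i] by (simp add: sum_subtractf)
    finally show "(IzP 1 *\<^sub>v ?v) $ i = 0\<^sub>v N $ i" using i by simp
  qed (use IzP_carrier in auto)
  ultimately have "\<exists>v. v \<in> carrier_vec N \<and> v \<noteq> 0\<^sub>v N \<and> IzP 1 *\<^sub>v v = 0\<^sub>v N"
    by (intro exI[of _ ?v]) auto
  then show ?thesis unfolding det_IzP_def using det_0_iff_vec_prod_zero[OF IzP_carrier] by simp
qed

lemma adj_IzP_1_col: assumes i: "i < N" and k: "k < N" shows "adj_IzP 1 $$ (i,k) = adj_IzP 1 $$ (k,k)"
proof (rule harmonic_const[where x = "\<lambda>i. adj_IzP 1 $$ (i,k)", OF _ i k])
  fix i assume i: "i < N"
  have "adj_IzP 1 $$ (i,k) - (\<Sum>j<N. P $$ (i,j) * adj_IzP 1 $$ (j,k)) = 0"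
    using IzP_adj_sum[OF i k, of 1] IzP_mult_sum[OF i] det_IzP_1 by simp
  then show "adj_IzP 1 $$ (i,k) = (\<Sum>j<N. P $$ (i,j) * adj_IzP 1 $$ (j,k))" by simp
qed

lemma harmonic_if_minor_kernel:
  assumes k: "k < N" and y: "y \<in> carrier_vec (N-1)" "mat_delete (IzP 1) k k *\<^sub>v y = 0\<^sub>v (N-1)"
    and i: "i < N" "i \<noteq> k"
  defines "x \<equiv> \<lambda>i. if i = k then 0 else y $ delete_index k i"
  shows "x i = (\<Sum>j<N. P $$ (i,j) * x j)"
proof -
  let ?M = "mat_delete (IzP 1) k k"
  have N: "N = Suc (N - 1)" using k by simp
  have di: "delete_index k i < N - 1" using delete_index_less[OF i(1,2) k] .
  have ii: "insert_index k (delete_index k i) = i" using i by (simp add: insert_delete_index)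
  have "0 = (?M *\<^sub>v y) $ delete_index k i" using y(2) di by simp
  also have "\<dots> = (\<Sum>j'<N-1. ?M $$ (delete_index k i, j') * y $ j')"
    by (rule index_mult_mat_vec_sum[OF mat_delete_carrier[OF IzP_carrier] y(1) di])
  also have "\<dots> = (\<Sum>j'<N-1. IzP 1 $$ (i, insert_index k j') * x (insert_index k j'))"
  proof (intro sum.cong refl)
    fix j' assume "j' \<in> {..<N-1}"
    then show "?M $$ (delete_index k i, j') * y $ j' = IzP 1 $$ (i, insert_index k j') * x (insert_index k j')"
      using mat_delete_index[of "IzP 1" "N-1" k k "delete_index k i" j'] IzP_carrier k di N
        insert_index_less[of j' N k] by (simp add: ii x_def)
  qed
  also have "\<dots> = (\<Sum>j<N. if j = k then 0 else IzP 1 $$ (i, j) * x j)"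
    by (rule sum_skip_index[OF k, symmetric])
  also have "\<dots> = (\<Sum>j<N. IzP 1 $$ (i, j) * x j)"
    by (intro sum.cong refl) (simp add: x_def)
  finally show ?thesis using IzP_mult_sum[OF i(1), of 1 x] by simp
qed

lemma adj_IzP_1_diag: assumes k: "k < N" shows "adj_IzP 1 $$ (k,k) \<noteq> 0"
proof
  let ?M = "mat_delete (IzP 1) k k"
  assume "adj_IzP 1 $$ (k,k) = 0"
  then have "det ?M = 0" using k by (simp add: adj_IzP_index neg_one_even_power)
  then obtain y where y: "y \<in> carrier_vec (N-1)" "y \<noteq> 0\<^sub>v (N-1)" "?M *\<^sub>v y = 0\<^sub>v (N-1)"
    using det_0_iff_vec_prod_zero[OF mat_delete_carrier[OF IzP_carrier]] by auto
  let ?x = "\<lambda>i. if i = k then 0 else y $ delete_index k i"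
  have "?x i = 0" if "i < N" for i
    using harmonic_zero[of k ?x, OF k _ harmonic_if_minor_kernel[OF k y(1,3)] that] by simp
  then have "y $ j' = 0" if "j' < N - 1" for j'
    using insert_index_less[OF that, of k] by (metis delete_insert_index)
  then have "y = 0\<^sub>v (N-1)" using y(1) by (intro eq_vecI) auto
  with y(2) show False by simp
qed

lemma f_u_1: "f_u N P u 1 = delta_u * adj_IzP 1 $$ (hd u, hd u)"
proof -
  have "f_u N P u 1 = tau_tilde P u 1 * det_IzP 1 + 1^(r-1) * delta_u * adj_IzP 1 $$ (last u, hd u)" by (rule f_u_eq)
  also have "adj_IzP 1 $$ (last u, hd u) = adj_IzP 1 $$ (hd u, hd u)" by (rule adj_IzP_1_col[OF last_u_less hd_u_less])
  finally show ?thesis by (simp only: det_IzP_1) simp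
qed

lemma f_u_1_nonzero: "f_u N P u 1 \<noteq> 0"
  unfolding f_u_1 using delta_u_pos adj_IzP_1_diag[OF hd_u_less] by simp

lemma p_adj_IzP_1: "(\<Sum>i<N. p i * adj_IzP 1 $$ (i, hd u)) = adj_IzP 1 $$ (hd u, hd u)"
proof -
  have "(\<Sum>i<N. p i * adj_IzP 1 $$ (i, hd u)) = (\<Sum>i<N. p i * adj_IzP 1 $$ (hd u, hd u))"
  proof (rule sum.cong)
    fix i assume "i \<in> {..<N}"
    then have "adj_IzP 1 $$ (i, hd u) = adj_IzP 1 $$ (hd u, hd u)" using adj_IzP_1_col[OF _ hd_u_less] by simp
    then show "p i * adj_IzP 1 $$ (i, hd u) = p i * adj_IzP 1 $$ (hd u, hd u)" by (simp only:)
  qed simp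
  also have "\<dots> = adj_IzP 1 $$ (hd u, hd u)" using p_sum by (simp add: sum_distrib_right[symmetric])
  finally show ?thesis .
qed

section \<open>The radius of convergence\<close>

lemma surv_mult_le_pow:
  assumes k: "k \<ge> 1" and q: "q \<ge> 1"
  shows "surv (q * k) \<le> p_min * (surv k / p_min) ^ q"
  using q
proof (induction q rule: nat_induct_at_least)
  case base then show ?case using p_min_pos by simp
next
  case (Suc q)
  have "surv (Suc q * k) = surv (q * k + k)" by (simp add: add.commute)
  also have "\<dots> \<le> surv (q * k) * surv k / p_min" by (rule surv_submult) (use Suc k in auto)
  also have "\<dots> \<le> p_min * (surv k / p_min) ^ q * surv k / p_min"
    using Suc.IH surv_nonneg p_min_pos by (intro divide_right_mono mult_right_mono) auto
  also have "\<dots> = p_min * (surv k / p_min) ^ Suc q" using p_min_pos by (simp add: field_simps)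
  finally show ?case .
qed

lemma surv_Suc_power_le:
  assumes k: "k \<ge> 1" and n: "n \<ge> k" and b0: "\<beta> \<ge> 0" and bk: "\<beta> ^ k = surv k / p_min"
    and z1: "z \<ge> 1" and th1: "z * \<beta> < 1"
  shows "surv (Suc n) * z ^ Suc n \<le> p_min * z ^ k * (z * \<beta>) ^ (Suc n - k)"
proof -
  define q where "q = Suc n div k"
  have q1: "q \<ge> 1"
  proof -
    have "k div k \<le> Suc n div k" using n by (intro div_le_mono) simp
    then show ?thesis unfolding q_def using k by simp
  qed
  have dm: "q * k + Suc n mod k = Suc n" unfolding q_def by (rule div_mult_mod_eq)
  have ml: "Suc n mod k < k" using k by simp
  have qk: "q * k \<le> Suc n" using dm by linarith
  have qk2: "Suc n < (q + 1) * k" using dm ml by (simp add: algebra_simps)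
  have "surv (Suc n) \<le> surv (q * k)" by (rule surv_antimono) (use q1 k qk in \<open>auto simp: one_le_mult_iff\<close>)
  also have "\<dots> \<le> p_min * (surv k / p_min) ^ q" using surv_mult_le_pow[OF k q1] .
  also have "(surv k / p_min) ^ q = \<beta> ^ (k * q)" using bk by (simp add: power_mult)
  finally have s1: "surv (Suc n) \<le> p_min * \<beta> ^ (k * q)" .
  have z2: "z ^ Suc n \<le> z ^ (k * q) * z ^ k"
  proof -
    have "z ^ Suc n \<le> z ^ ((q + 1) * k)" by (rule power_increasing) (use qk2 z1 in auto)
    also have "\<dots> = z ^ (k * q) * z ^ k" by (simp add: algebra_simps power_add)
    finally show ?thesis .
  qed
  have "surv (Suc n) * z ^ Suc n \<le> p_min * \<beta> ^ (k * q) * (z ^ (k * q) * z ^ k)"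
    by (rule mult_mono[OF s1 z2]) (use z1 p_min_pos b0 in auto)
  also have "\<dots> = p_min * z ^ k * (z * \<beta>) ^ (k * q)" by (simp add: power_mult_distrib algebra_simps)
  also have "(z * \<beta>) ^ (k * q) \<le> (z * \<beta>) ^ (Suc n - k)"
    by (rule power_decreasing) (use qk2 z1 b0 th1 in \<open>auto simp: algebra_simps\<close>)
  then have "p_min * z ^ k * (z * \<beta>) ^ (k * q) \<le> p_min * z ^ k * (z * \<beta>) ^ (Suc n - k)"
    using p_min_pos z1 by (intro mult_left_mono) auto
  finally show ?thesis .
qed

text \<open>Once \<open>surv k\<close> drops below \<open>p_min * \<rho> ^ k\<close>, submultiplicativity makes \<open>surv\<close> decay
  at least geometrically with a rate \<open>\<beta> < \<rho>\<close>.\<close>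

lemma conv_beyond_if_surv_small:
  assumes rho: "\<rho> > 0" and k: "k \<ge> 1" and lt: "surv k < p_min * \<rho> ^ k"
  shows "\<exists>z > 1 / \<rho>. conv_at z"
proof (cases "1 / \<rho> < 1")
  case True
  have "1/\<rho> < (1/\<rho> + 1)/2" "(1/\<rho> + 1)/2 < 1" using True by simp_all
  moreover have "0 \<le> (1/\<rho> + 1)/2" using rho by simp
  ultimately show ?thesis using conv_at_less_1 by blast
next
  case False
  then have rho1: "\<rho> \<le> 1" using rho by (simp add: field_simps)
  define \<beta> where "\<beta> = root k (surv k / p_min)"
  have c0: "surv k / p_min \<ge> 0" using surv_nonneg p_min_pos by simp
  have b0: "\<beta> \<ge> 0" unfolding \<beta>_def using c0 by (rule real_root_ge_zero)
  have bk: "\<beta> ^ k = surv k / p_min" unfolding \<beta>_def using c0 k by simp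
  have "surv k / p_min < \<rho> ^ k" using lt p_min_pos by (simp add: divide_less_eq mult.commute)
  then have brho: "\<beta> < \<rho>" using power_less_imp_less_base[of \<beta> k \<rho>] bk rho by simp
  define z where "z = 2 / (\<beta> + \<rho>)"
  have zgt: "z > 1 / \<rho>" unfolding z_def using brho b0 rho by (simp add: field_simps)
  have z1: "z \<ge> 1" using zgt False by simp
  have th1: "z * \<beta> < 1" unfolding z_def using brho b0 rho by (simp add: field_simps)
  have sg: "summable (\<lambda>n. p_min * z ^ k * (z * \<beta>) ^ (Suc n - k))"
  proof -
    have "summable (\<lambda>n. p_min * z ^ k * ((z * \<beta>) * (z * \<beta>) ^ n))"
      using th1 z1 b0 by (intro summable_mult summable_geometric) simp
    then have "summable (\<lambda>n. p_min * z ^ k * (z * \<beta>) ^ (Suc (n + k) - k))" by simp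
    then show ?thesis by (subst summable_iff_shift[symmetric, of _ k])
  qed
  have "summable (\<lambda>n. surv (Suc n) * z ^ Suc n)"
  proof (rule summable_comparison_test'[OF sg])
    fix n assume "k \<le> n"
    then show "norm (surv (Suc n) * z ^ Suc n) \<le> p_min * z ^ k * (z * \<beta>) ^ (Suc n - k)"
      using surv_Suc_power_le[OF k _ b0 bk z1 th1, of n] surv_nonneg[of "Suc n"] z1 by simp
  qed
  then show ?thesis using zgt z1 unfolding conv_at_def by auto
qed

lemma p_min_le_1: "p_min \<le> 1"
proof -
  have "p_min \<le> p (hd u)" by (rule p_min_le[OF hd_u_less])
  also have "p (hd u) \<le> (\<Sum>i<N. p i)" by (rule member_le_sum) (use hd_u_less p_nonneg in auto)
  finally show ?thesis using p_sum by simp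
qed

lemma gf_hit_le_if_surv_ge:
  assumes lb: "\<And>k. k \<ge> 1 \<Longrightarrow> p_min \<le> surv k" and z: "0 < z" "z < 1"
  shows "gf_hit z \<le> 1 - p_min"
proof -
  have c: "conv_at z" using z by (intro conv_at_less_1) auto
  have geom: "(\<lambda>n. p_min * z ^ Suc n) sums (p_min * (z / (1 - z)))"
    using sums_mult[OF geometric_sums[of z], of "p_min * z"] z by (simp add: field_simps)
  have "p_min * (z / (1 - z)) \<le> gf_surv z"
    unfolding gf_surv_def using geom lb z c unfolding conv_at_def
    by (intro sums_le[OF _ geom summable_sums]) (auto intro!: mult_right_mono)
  then have "p_min * z \<le> (1 - z) * gf_surv z" using z by (simp add: field_simps)
  then have "gf_hit z \<le> z * (1 - p_min)" using gf_surv_eq[OF c] by (simp add: algebra_simps)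
  also have "\<dots> \<le> 1 - p_min" using z p_min_le_1 by (simp add: mult_left_le_one_le)
  finally show ?thesis .
qed

text \<open>The hole is hit almost surely: \<open>gf_hit z \<rightarrow> 1\<close> as \<open>z \<rightarrow> 1\<^sup>-\<close>, because
  \<open>f_u 1 \<noteq> 0\<close> lets us solve for \<open>gf_hit\<close> near \<open>1\<close>.\<close>

lemma gf_hit_tendsto_1: "(gf_hit \<longlongrightarrow> 1) (at_left 1)"
proof -
  define h where "h z = delta_u * z ^ r * (\<Sum>i<N. p i * adj_IzP z $$ (i, hd u)) / f_u N P u z" for z
  have "isCont h 1" unfolding h_def
    by (intro continuous_intros isCont_p_adj_IzP isCont_f_u f_u_1_nonzero)
  moreover have "h 1 = 1" unfolding h_def using p_adj_IzP_1 f_u_1 f_u_1_nonzero by simp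
  ultimately have h: "(h \<longlongrightarrow> 1) (at_left 1)"
    using tendsto_mono[OF at_le[OF subset_UNIV]] unfolding isCont_def by metis
  have "(f_u N P u \<longlongrightarrow> f_u N P u 1) (at_left 1)"
    using tendsto_mono[OF at_le[OF subset_UNIV] isCont_f_u[unfolded isCont_def]] by simp
  then have "eventually (\<lambda>z. f_u N P u z \<noteq> 0) (at_left 1)"
    using f_u_1_nonzero by (rule tendsto_imp_eventually_ne)
  moreover have "eventually (\<lambda>z. z \<in> {0<..<1}) (at_left (1::real))"
    by (rule eventually_at_left_real) simp
  ultimately have "eventually (\<lambda>z. h z = gf_hit z) (at_left 1)"
  proof eventually_elim
    case (elim z)
    then show ?case
      using gf_hit_mult_f_u[OF conv_at_less_1[of z]] unfolding h_def by (auto simp: field_simps)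
  qed
  then show ?thesis using h by (rule tendsto_cong[THEN iffD1])
qed

lemma ex_conv_at_gt_1: "\<exists>z>1. conv_at z"
proof (rule ccontr)
  assume no: "\<not> (\<exists>z>1. conv_at z)"
  have "p_min \<le> surv k" if "k \<ge> 1" for k
    using conv_beyond_if_surv_small[of 1 k] that no by force
  then have "eventually (\<lambda>z. gf_hit z \<le> 1 - p_min) (at_left 1)"
    using gf_hit_le_if_surv_ge eventually_at_left_real[of 0 "1::real"] by (auto elim: eventually_mono)
  then have "1 \<le> 1 - p_min" using tendsto_upperbound[OF gf_hit_tendsto_1] by simp
  then show False using p_min_pos by simp
qed

lemma gf_hit_pos:
  assumes c: "conv_at z" and z: "z > 0"
  shows "gf_hit z > 0"
proof -
  obtain r' where r': "Suc r' = r" using r_ge2 by (cases r) auto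
  have "(\<Sum>n\<in>{r'}. first_hit (Suc n) * z ^ Suc n) \<le> gf_hit z"
    unfolding gf_hit_def
    by (rule sum_le_suminf[OF summable_first_hit[OF c]]) (use z first_hit_nonneg in auto)
  moreover have "first_hit r * z ^ r > 0"
    unfolding first_hit_r using p_pos[OF hd_u_less] delta_u_pos z by simp
  ultimately show ?thesis using r' by (simp del: power_Suc)
qed

text \<open>At a real root \<open>z0 \<noteq> 1\<close> of \<open>f_u\<close> inside the disc of convergence, a kernel vector of
  \<open>I - z0 P\<close> is orthogonal to \<open>p\<close> and, paired with the row vector of generating functions,
  must vanish at the last letter of \<open>u\<close>.\<close>

lemma kernel_vec_last_u:
  assumes c: "conv_at z" and z: "z > 0" "z \<noteq> 1"
    and ker: "\<And>i. i < N \<Longrightarrow> (\<Sum>k<N. IzP z $$ (i,k) * x k) = 0"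
  shows "x (last u) = 0"
proof -
  have pair: "(\<Sum>j<N. (\<Sum>i<N. w i * IzP z $$ (i,j)) * x j) = 0" for w
  proof -
    have "(\<Sum>j<N. (\<Sum>i<N. w i * IzP z $$ (i,j)) * x j) = (\<Sum>i<N. w i * (\<Sum>j<N. IzP z $$ (i,j) * x j))"
      by (simp only: sum_distrib_right sum_distrib_left mult.assoc) (rule sum.swap)
    then show ?thesis using ker by simp
  qed
  have "(1 - z) * (\<Sum>j<N. p j * x j) = 0"
    using pair[of p] by (simp add: p_IzP sum_distrib_left mult.assoc)
  then have px: "(\<Sum>j<N. p j * x j) = 0" using z by simp
  have "0 = (\<Sum>j<N. (p j * z - (if j = last u then gf_hit z else 0)) * x j)"
    using pair[of "\<lambda>i. gf_last i z"] by (simp add: gf_last_IzP[OF c])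
  also have "\<dots> = (\<Sum>j<N. z * (p j * x j) - (if j = last u then gf_hit z * x j else 0))"
    by (intro sum.cong refl) (auto simp: algebra_simps)
  also have "\<dots> = z * (\<Sum>j<N. p j * x j) - gf_hit z * x (last u)"
    using last_u_less by (simp add: sum_subtractf sum_distrib_left)
  finally show ?thesis using px gf_hit_pos[OF c z(1)] by simp
qed

lemma not_conv_at_if_surv_ge:
  assumes lb: "\<And>n. c / z0 ^ n \<le> surv (Suc n)" and c: "c > 0" and z: "0 < z0" "z0 < z1"
  shows "\<not> conv_at z1"
proof
  assume "conv_at z1"
  then have "(\<lambda>n. surv (Suc n) * z1 ^ Suc n) \<longlonglongrightarrow> 0"
    unfolding conv_at_def by (auto intro: summable_LIMSEQ_zero)
  then have "eventually (\<lambda>n. surv (Suc n) * z1 ^ Suc n < c * z1) sequentially"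
    using c z by (intro order_tendstoD(2)) auto
  then obtain n where n: "surv (Suc n) * z1 ^ Suc n < c * z1" by (auto simp: eventually_sequentially)
  have "c * z1 \<le> c * z1 * (z1 / z0) ^ n" using c z by (simp add: one_le_power)
  also have "\<dots> = c / z0 ^ n * z1 ^ Suc n" using z by (simp add: field_simps power_divide)
  also have "\<dots> \<le> surv (Suc n) * z1 ^ Suc n" using lb[of n] z by (intro mult_right_mono) auto
  finally show False using n by simp
qed

lemma no_conv_beyond_root:
  assumes z0: "z0 > 0" and root: "f_u N P u z0 = 0" and z1: "z1 > z0"
  shows "\<not> conv_at z1"
proof
  assume c1: "conv_at z1"
  then have c0: "conv_at z0" using conv_at_mono z0 z1 by simp
  have "delta_u * z0 ^ r * det_IzP z0 * p (hd u) = 0" using gf_hit_mult_f_u_det[OF c0] root by simp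
  then have "det (IzP z0) = 0" using delta_u_pos z0 p_pos[OF hd_u_less] by (simp add: det_IzP_def)
  then obtain v where v: "v \<in> carrier_vec N" "v \<noteq> 0\<^sub>v N" "IzP z0 *\<^sub>v v = 0\<^sub>v N"
    using det_0_iff_vec_prod_zero[OF IzP_carrier] by auto
  have ker: "(\<Sum>k<N. IzP z0 $$ (i,k) * v $ k) = 0" if "i < N" for i
    using index_mult_mat_vec_sum[OF IzP_carrier[of z0] v(1) that] v(3) that by simp
  have eig: "v $ i = z0 * (\<Sum>k<N. P $$ (i,k) * v $ k)" if "i < N" for i
    using ker[OF that] IzP_mult_sum[OF that] by simp
  have "z0 \<noteq> 1" using root f_u_1_nonzero by auto
  then have "v $ last u = 0" using kernel_vec_last_u[OF c0 z0] ker by blast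
  moreover obtain i0 where "i0 < N" "v $ i0 \<noteq> 0" using v(1,2) by (metis eq_vecI carrier_vecD index_zero_vec)
  ultimately have "p_min / z0 ^ n \<le> surv (Suc n)" for n
    using surv_lower_if_eigvec[OF z0 eig] by blast
  then show False using not_conv_at_if_surv_ge[OF _ p_min_pos z0 z1] c1 by blast
qed

lemma surv_lower_bound:
  assumes z0: "z0 > 0" and root: "f_u N P u z0 = 0" and k: "k \<ge> 1"
  shows "p_min * (1 / z0) ^ k \<le> surv k"
proof (rule ccontr)
  assume "\<not> p_min * (1 / z0) ^ k \<le> surv k"
  then obtain z where "z > z0" "conv_at z" using conv_beyond_if_surv_small[of "1/z0" k] z0 k by auto
  then show False using no_conv_beyond_root[OF z0 root] by blast
qed

text \<open>Behaviour at the radius of convergence \<open>R > 1\<close> of \<open>gf_surv\<close>: \<open>gf_surv\<close> blows up, so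
  \<open>(z - 1) * gf_hit z\<close> does too, and the identity \<open>gf_hit_mult_f_u_det\<close> forces
  \<open>f_u R = 0\<close>.\<close>

lemma gf_surv_at_top_at_radius:
  assumes R: "R > 1" and below: "\<And>z. 0 \<le> z \<Longrightarrow> z < R \<Longrightarrow> conv_at z" and notR: "\<not> conv_at R"
  shows "filterlim gf_surv at_top (at_left R)"
  unfolding filterlim_at_top
proof
  fix M
  let ?T = "\<lambda>n. surv (Suc n) * R ^ Suc n"
  obtain K where K: "M < (\<Sum>n<K. ?T n)"
  proof (rule ccontr)
    assume "\<not> thesis"
    then have "(\<Sum>n<K. ?T n) \<le> M" for K using that by (meson not_le)
    then have "summable ?T" using R surv_nonneg by (intro summableI_nonneg_bounded) auto
    then show False using notR R unfolding conv_at_def by simp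
  qed
  have "((\<lambda>z. \<Sum>n<K. surv (Suc n) * z ^ Suc n) \<longlongrightarrow> (\<Sum>n<K. ?T n)) (at_left R)"
    by (intro tendsto_intros)
  then have "eventually (\<lambda>z. M < (\<Sum>n<K. surv (Suc n) * z ^ Suc n)) (at_left R)"
    using K by (rule order_tendstoD(1))
  moreover have "eventually (\<lambda>z. z \<in> {0<..<R}) (at_left R)"
    using R by (intro eventually_at_left_real) simp
  ultimately show "eventually (\<lambda>z. M \<le> gf_surv z) (at_left R)"
  proof eventually_elim
    case (elim z)
    then have "conv_at z" using below by simp
    then have "(\<Sum>n<K. surv (Suc n) * z ^ Suc n) \<le> gf_surv z"
      unfolding gf_surv_def conv_at_def using elim surv_nonneg by (intro sum_le_suminf) auto
    then show ?case using elim by simp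
  qed
qed

lemma f_u_zero_at_radius:
  assumes R: "R > 1" and below: "\<And>z. 0 \<le> z \<Longrightarrow> z < R \<Longrightarrow> conv_at z" and notR: "\<not> conv_at R"
  shows "f_u N P u R = 0"
proof -
  define d where "d = ((R - 1) / 2) ^ 2"
  have near: "eventually (\<lambda>z. z \<in> {(R + 1) / 2<..<R}) (at_left R)"
    using R by (intro eventually_at_left_real) simp
  have "filterlim (\<lambda>z. d * gf_surv z) at_top (at_left R)"
    using R by (intro filterlim_tendsto_pos_mult_at_top[OF tendsto_const] gf_surv_at_top_at_radius
        below notR) (auto simp: d_def)
  moreover have "eventually (\<lambda>z. d * gf_surv z \<le> (z - 1) * gf_hit z) (at_left R)"
    using near
  proof eventually_elim
    case (elim z)
    then have z: "z > 1" "z < R" "d \<le> (z - 1) ^ 2" using R by (auto simp: d_def intro!: power_mono)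
    have hit: "gf_hit z = z + (z - 1) * gf_surv z"
      using gf_surv_eq[OF below] z by (simp add: algebra_simps)
    have "gf_surv z \<ge> 0"
      using below[of z] z surv_nonneg unfolding gf_surv_def conv_at_def by (auto intro!: suminf_nonneg)
    then have "d * gf_surv z \<le> (z - 1) ^ 2 * gf_surv z" using z(3) by (simp add: mult_right_mono)
    moreover have "(z - 1) * gf_hit z = (z - 1) * z + (z - 1) ^ 2 * gf_surv z"
      unfolding hit by (simp add: power2_eq_square algebra_simps)
    moreover have "0 \<le> (z - 1) * z" using z by simp
    ultimately show ?case by linarith
  qed
  ultimately have "filterlim (\<lambda>z. (z - 1) * gf_hit z) at_top (at_left R)"
    by (rule filterlim_at_top_mono)
  moreover have "(det_IzP \<longlongrightarrow> det_IzP R) (at_left R)"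
    using tendsto_mono[OF at_le[OF subset_UNIV] isCont_det_IzP[unfolded isCont_def]] by simp
  then have "((\<lambda>z. - (delta_u * z ^ r * det_IzP z * p (hd u))) \<longlongrightarrow> - (delta_u * R ^ r * det_IzP R * p (hd u)))
      (at_left R)"
    by (intro tendsto_intros)
  ultimately have "((\<lambda>z. - (delta_u * z ^ r * det_IzP z * p (hd u)) / ((z - 1) * gf_hit z)) \<longlongrightarrow> 0) (at_left R)"
    by (intro tendsto_divide_0 filterlim_at_top_imp_at_infinity)
  moreover have "eventually (\<lambda>z. - (delta_u * z ^ r * det_IzP z * p (hd u)) / ((z - 1) * gf_hit z)
      = f_u N P u z) (at_left R)"
    using near
  proof eventually_elim
    case (elim z)
    then have z: "z > 1" "conv_at z" using below R by auto
    then have "gf_hit z > 0" using gf_hit_pos by simp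
    with z show ?case using gf_hit_mult_f_u_det[OF z(2)] by (simp add: field_simps)
  qed
  ultimately have "(f_u N P u \<longlongrightarrow> 0) (at_left R)" by (rule tendsto_cong[THEN iffD1, rotated])
  moreover have "(f_u N P u \<longlongrightarrow> f_u N P u R) (at_left R)"
    using tendsto_mono[OF at_le[OF subset_UNIV] isCont_f_u[unfolded isCont_def]] by simp
  ultimately show ?thesis using tendsto_unique[of "at_left R"] by force
qed

lemma conv_below_least_root:
  assumes z0: "z0 > 0" and least: "\<And>z. z > 0 \<Longrightarrow> f_u N P u z = 0 \<Longrightarrow> z0 \<le> z"
    and z: "0 \<le> z" "z < z0"
  shows "conv_at z"
proof (rule ccontr)
  assume ncv: "\<not> conv_at z"
  define R where "R = Sup {z. conv_at z}"
  have bound: "y \<le> z" if "conv_at y" for y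
  proof (rule ccontr)
    assume "\<not> y \<le> z"
    then show False using conv_at_mono[OF that, of z] z ncv by simp
  qed
  then have bdd: "bdd_above {z. conv_at z}" unfolding bdd_above_def by blast
  have "conv_at 0" using conv_at_less_1 by simp
  then have Rz: "R \<le> z" unfolding R_def using bound by (intro cSup_least) auto
  obtain z1 where z1: "z1 > 1" "conv_at z1" using ex_conv_at_gt_1 by blast
  then have R1: "R > 1" unfolding R_def using bdd by (meson cSup_upper less_le_trans mem_Collect_eq)
  have below: "conv_at y" if "0 \<le> y" "y < R" for y
  proof -
    have "\<exists>x. conv_at x \<and> y < x"
      using that less_cSup_iff[of "{z. conv_at z}" y] \<open>conv_at 0\<close> bdd unfolding R_def by auto
    then obtain x where "conv_at x" "y < x" by blast
    then show ?thesis using conv_at_mono that by simp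
  qed
  have notR: "\<not> conv_at R"
  proof
    assume "conv_at R"
    then have "(\<lambda>n. surv (Suc n) * R ^ Suc n) \<longlonglongrightarrow> 0"
      unfolding conv_at_def by (auto intro: summable_LIMSEQ_zero)
    then have "eventually (\<lambda>n. surv (Suc n) * R ^ Suc n < p_min) sequentially"
      using p_min_pos by (rule order_tendstoD(2))
    then obtain n where "surv (Suc n) * R ^ Suc n < p_min" by (auto simp: eventually_sequentially)
    then have "surv (Suc n) < p_min * (1 / R) ^ Suc n" using R1 by (simp add: field_simps power_divide)
    then obtain y where "y > 1 / (1 / R)" "conv_at y" using conv_beyond_if_surv_small[of "1/R" "Suc n"] R1 by auto
    then have "y \<le> R" unfolding R_def using bdd by (intro cSup_upper) auto
    then show False using \<open>y > 1 / (1 / R)\<close> by simp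
  qed
  have "z0 \<le> R" using least f_u_zero_at_radius[OF R1 below notR] R1 by simp
  then show False using Rz z by simp
qed

lemma surv_upper_eventually:
  assumes "conv_at z"
  shows "eventually (\<lambda>m. surv (m + r) * z ^ (m + r) \<le> 1) sequentially"
proof -
  have "(\<lambda>n. surv (Suc n) * z ^ Suc n) \<longlonglongrightarrow> 0"
    using assms unfolding conv_at_def by (auto intro: summable_LIMSEQ_zero)
  then have "eventually (\<lambda>n. surv (Suc n) * z ^ Suc n < 1) sequentially" by (rule order_tendstoD(2)) simp
  then obtain n0 where n0: "\<And>n. n \<ge> n0 \<Longrightarrow> surv (Suc n) * z ^ Suc n < 1"
    by (auto simp: eventually_sequentially)
  show ?thesis unfolding eventually_sequentially
  proof (intro exI allI impI)
    fix m assume "n0 \<le> m"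
    then have "n0 \<le> m + r - 1" using r_ge2 by simp
    moreover have "Suc (m + r - 1) = m + r" using r_ge2 by simp
    ultimately show "surv (m + r) * z ^ (m + r) \<le> 1" using n0[of "m + r - 1"] by simp
  qed
qed

lemma neg_ln_surv_tendsto:
  assumes z0: "z0 > 0" and root: "f_u N P u z0 = 0"
    and least: "\<And>z. z > 0 \<Longrightarrow> f_u N P u z = 0 \<Longrightarrow> z0 \<le> z"
  shows "(\<lambda>m. - ln (surv (m + r)) / real m) \<longlonglongrightarrow> ln z0"
proof (rule tendstoI)
  fix e :: real assume e: "e > 0"
  define z where "z = z0 * exp (- e / 2)"
  have z: "z > 0" "z < z0" "ln z = ln z0 - e / 2"
    unfolding z_def using z0 e by (simp_all add: ln_mult)
  have lower: "p_min * (1 / z0) ^ (m + r) \<le> surv (m + r)" for m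
    using surv_lower_bound[OF z0 root] r_ge2 by simp
  have "((\<lambda>m::nat. ln z + real r * ln z / real m) \<longlonglongrightarrow> ln z + 0)" by (intro tendsto_intros)
  moreover have "ln z0 - e < ln z + 0" using z e by simp
  ultimately have "eventually (\<lambda>m::nat. ln z0 - e < ln z + real r * ln z / real m) sequentially"
    by (rule order_tendstoD(1))
  moreover have "eventually (\<lambda>m::nat. ln z0 + (real r * ln z0 - ln p_min) / real m < ln z0 + e) sequentially"
  proof (rule order_tendstoD(2))
    show "((\<lambda>m::nat. ln z0 + (real r * ln z0 - ln p_min) / real m) \<longlonglongrightarrow> ln z0 + 0)"
      by (intro tendsto_intros)
  qed (use e in simp)
  moreover have "eventually (\<lambda>m. surv (m + r) * z ^ (m + r) \<le> 1) sequentially"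
    using conv_below_least_root[OF z0 least less_imp_le[OF z(1)] z(2)] by (rule surv_upper_eventually)
  ultimately show "eventually (\<lambda>m. dist (- ln (surv (m + r)) / real m) (ln z0) < e) sequentially"
    using eventually_gt_at_top[of 0]
  proof eventually_elim
    case (elim m)
    let ?s = "surv (m + r)"
    have "p_min * (1 / z0) ^ (m + r) > 0" using p_min_pos z0 by simp
    then have s: "?s > 0" using lower[of m] by linarith
    have m: "real m > 0" using elim by simp
    have "ln ?s + real (m + r) * ln z \<le> 0"
      using elim s z by (simp add: ln_mult ln_realpow flip: ln_le_zero_iff)
    then have "real (m + r) * ln z / real m \<le> - ln ?s / real m" using m by (intro divide_right_mono) auto
    moreover have "ln p_min - real (m + r) * ln z0 \<le> ln ?s"
      using lower[of m] p_min_pos z0 s by (simp add: ln_mult ln_realpow ln_div flip: ln_le_cancel_iff)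
    then have "- ln ?s / real m \<le> (real (m + r) * ln z0 - ln p_min) / real m"
      using m by (intro divide_right_mono) auto
    ultimately have "ln z + real r * ln z / real m \<le> - ln ?s / real m"
      "- ln ?s / real m \<le> ln z0 + (real r * ln z0 - ln p_min) / real m"
      using m by (simp_all add: field_simps)
    then show ?case using elim by (simp add: dist_real_def abs_less_iff)
  qed
qed

end

theorem theorem4p10:
  fixes N :: nat and A P :: "real mat" and p :: "nat \<Rightarrow> real"
    and u :: "nat list" and z0 :: real
  assumes A01: "zero_one_mat N A"
    and Airr: "irreducible_mat N A"
    and Pst: "row_stochastic_compatible N A P"
    and pst: "stationary_vector N P p"
    and u_states: "set u \<subseteq> {..<N}"
    and u_allowed: "allowed N A u"
    and u_len: "length u \<ge> 2"
    and z0_pos: "z0 > 0"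
    and z0_root: "f_u N P u z0 = 0"
    and z0_least: "\<And>z. z > 0 \<Longrightarrow> f_u N P u z = 0 \<Longrightarrow> z0 \<le> z"
  shows "(\<lambda>m. - ln (markov_measure_lvl N A p P (m + length u)
                      (survivors N A (cyl N A u) m)) / real m)
         \<longlonglongrightarrow> ln z0"
proof -
  interpret markov_hole u N A P p using A01 Airr Pst pst u_states u_allowed u_len by unfold_locales
  have "markov_measure_lvl N A p P (m + length u) (survivors N A (cyl N A u) m) = surv (m + length u)" for m
    by (rule measure_survivors_eq_surv)
  then show ?thesis using neg_ln_surv_tendsto[OF z0_pos z0_root z0_least] by simp
qed

end
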